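(* Let $\mathcal{E}:\mathcal{S}(\mathcal{H}_1)\otimes\mathcal{S}(\mathcal{H}_2)\to\mathcal{S}(\mathcal{H}_1)$, with $\mathcal{H}_1$ the space of $n$ qubits, be any channel that commutes with the dephasing map, $\mathcal{E}\circ\Delta=\Delta\circ\mathcal{E}$, where $\Delta(\rho)=\sum_x|x\rangle\langle x|\rho|x\rangle\langle x|$. For a state $\tau\in\mathcal{S}(\mathcal{H}_2)$ define $\mathcal{E}_\tau(\rho):=\mathcal{E}(\rho\otimes\tau)$. Then for all states $\tau$, $\mathcal{D}\big(\mathcal{E}_\tau,H^{\otimes n}\big)\ge 1-\frac{1}{2^n}$.
   Context: $\mathcal{D}$ is the induced trace distance on channels, $\mathcal{D}(\mathcal{E},\mathcal{V})=\max_\rho\tfrac12\|\mathcal{E}(\rho)-\mathcal{V}(\rho)\|_1$, and $H^{\otimes n}$ denotes the channel $\rho\mapsto H^{\otimes n}\rho H^{\otimes n}$. *)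

theory Defs
  imports "Jordan_Normal_Form.Jordan_Normal_Form" "Jordan_Normal_Form.Schur_Decomposition"
begin

definition kron :: "complex mat \<Rightarrow> complex mat \<Rightarrow> complex mat" where
  "kron A B = mat (dim_row A * dim_row B) (dim_col A * dim_col B)
     (\<lambda>(i,j). A $$ (i div dim_row B, j div dim_col B) * B $$ (i mod dim_row B, j mod dim_col B))"

definition psd :: "nat \<Rightarrow> complex mat \<Rightarrow> bool" where
  "psd d A \<longleftrightarrow> A \<in> carrier_mat d d \<and> mat_adjoint A = A \<and>
     (\<forall>v \<in> carrier_vec d. 0 \<le> Re (\<Sum>i<d. \<Sum>j<d. cnj (v $ i) * A $$ (i,j) * v $ j))"

definition mtrace :: "complex mat \<Rightarrow> complex" where
  "mtrace A = (\<Sum>i<dim_row A. A $$ (i,i))"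

definition density :: "nat \<Rightarrow> complex mat \<Rightarrow> bool" where
  "density d \<rho> \<longleftrightarrow> psd d \<rho> \<and> mtrace \<rho> = 1"

text \<open>Trace norm = sum of singular values, i.e. the sum (with algebraic multiplicity)
  of the square roots of the eigenvalues of A^dagger A.\<close>
definition trace_norm :: "complex mat \<Rightarrow> real" where
  "trace_norm A = (let p = char_poly (mat_adjoint A * A) in
      \<Sum>z\<in>{x. poly p x = 0}. real (Polynomial.order z p) * sqrt (Re z))"

definition mat_sum_list :: "nat \<Rightarrow> nat \<Rightarrow> complex mat list \<Rightarrow> complex mat" where
  "mat_sum_list r c Ms = foldr (+) Ms (0\<^sub>m r c)"

definition channel :: "nat \<Rightarrow> nat \<Rightarrow> (complex mat \<Rightarrow> complex mat) \<Rightarrow> bool" where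
  "channel din dout E \<longleftrightarrow> (\<exists>Ks. (\<forall>K\<in>set Ks. K \<in> carrier_mat dout din) \<and>
      mat_sum_list din din (map (\<lambda>K. mat_adjoint K * K) Ks) = 1\<^sub>m din \<and>
      (\<forall>X \<in> carrier_mat din din. E X = mat_sum_list dout dout (map (\<lambda>K. K * X * mat_adjoint K) Ks)))"

definition dephase :: "nat \<Rightarrow> complex mat \<Rightarrow> complex mat" where
  "dephase d X = mat d d (\<lambda>(i,j). if i = j then X $$ (i,i) else 0)"

definition chan_dist :: "nat \<Rightarrow> (complex mat \<Rightarrow> complex mat) \<Rightarrow> (complex mat \<Rightarrow> complex mat) \<Rightarrow> real" where
  "chan_dist d E V = Sup {trace_norm (E \<rho> - V \<rho>) / 2 | \<rho>. density d \<rho>}"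

definition hadamard :: "complex mat" where
  "hadamard = mat 2 2 (\<lambda>(i,j). (if i = 1 \<and> j = 1 then -1 else 1) / complex_of_real (sqrt 2))"

fun hadamard_pow :: "nat \<Rightarrow> complex mat" where
  "hadamard_pow 0 = 1\<^sub>m 1"
| "hadamard_pow (Suc n) = kron hadamard (hadamard_pow n)"

end

theory Submission
  imports Defs
begin

text \<open>The witnesses are the states \<open>\<rho>\<^sub>y = H|y\<rangle>\<langle>y|H\<close> with \<open>H = H\<^sup>\<otimes>\<^sup>n\<close>, which the Hadamard
  channel sends to the basis projectors \<open>|y\<rangle>\<langle>y|\<close>. All of them dephase to \<open>I/2\<^sup>n\<close>, so by
  covariance the outputs \<open>E(\<rho>\<^sub>y \<otimes> \<tau>)\<close> share one diagonal; it sums to 1, hence for some \<open>y\<close>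
  the \<open>y\<close>-th diagonal entry is at most \<open>2\<^sup>-\<^sup>n\<close>. For a traceless Hermitian \<open>M\<close>, expanding
  \<open>M\<^sub>y\<^sub>y\<close> in an eigenbasis gives \<open>\<parallel>M\<parallel>\<^sub>1 \<ge> -2 M\<^sub>y\<^sub>y\<close>; applied to
  \<open>M = E(\<rho>\<^sub>y \<otimes> \<tau>) - |y\<rangle>\<langle>y|\<close> this yields \<open>\<parallel>M\<parallel>\<^sub>1 \<ge> 2 - 2\<^sup>1\<^sup>-\<^sup>n\<close>.
  Since the trace norm is defined through the characteristic polynomial of \<open>M\<^sup>* M\<close>, these
  eigenvalue arguments rest on the spectral theorem for Hermitian matrices, proved by deflation
  with Householder reflections.\<close>

lemma sum_lessThan_mult: "(\<Sum>k<(a::nat)*b. f k) = (\<Sum>i<a. \<Sum>j<b. f (i*b+j))"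
proof -
  have "(\<Sum>k<a*b. f k) = (\<Sum>i<a. \<Sum>k\<in>{i*b..<i*b+b}. f k)"
    by (rule sum.nat_group[symmetric])
  also have "\<dots> = (\<Sum>i<a. \<Sum>j<b. f (i*b+j))"
  proof (rule sum.cong[OF refl])
    fix i
    show "(\<Sum>k\<in>{i*b..<i*b+b}. f k) = (\<Sum>j<b. f (i*b+j))"
      using sum.shift_bounds_nat_ivl[of f 0 "i*b" b] by (simp add: lessThan_atLeast0 add.commute)
  qed
  finally show ?thesis .
qed

lemma less_mult_div_mod: "(i::nat) < a * b \<Longrightarrow> i div b < a \<and> i mod b < b"
  by (metis less_mult_imp_div_less mod_less_divisor mult_zero_right nat_neq_iff not_less_zero)

lemma mult_add_less_mult: "(i::nat) < a \<Longrightarrow> j < b \<Longrightarrow> i * b + j < a * b"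
  by (metis add.commute add_less_cancel_left less_le_trans mult_Suc mult_le_mono1 Suc_leI)

lemma eq_iff_div_mod_eq: "((i::nat) = j) = (i div b = j div b \<and> i mod b = j mod b)"
  by (metis div_mult_mod_eq)

lemma mat_adjoint_altdef: "mat_adjoint A = mat (dim_col A) (dim_row A) (\<lambda>(i,j). cnj (A $$ (j,i)))"
  by (rule eq_matI) (auto simp: mat_adjoint_def mat_of_rows_def)

lemma dim_row_mat_adjoint[simp]: "dim_row (mat_adjoint (A::complex mat)) = dim_col A"
  and dim_col_mat_adjoint[simp]: "dim_col (mat_adjoint (A::complex mat)) = dim_row A"
  unfolding mat_adjoint_altdef by simp_all

lemma index_mat_adjoint[simp]:
  "i < dim_col (A::complex mat) \<Longrightarrow> j < dim_row A \<Longrightarrow> mat_adjoint A $$ (i,j) = cnj (A $$ (j,i))"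
  by (simp add: mat_adjoint_altdef)

lemma mat_adjoint_carrier[simp]: "(A::complex mat) \<in> carrier_mat r c \<Longrightarrow> mat_adjoint A \<in> carrier_mat c r"
  unfolding carrier_mat_def by simp

lemma mat_adjoint_adjoint[simp]: "mat_adjoint (mat_adjoint (A::complex mat)) = A"
  by (rule eq_matI) simp_all

lemma mat_adjoint_one[simp]: "mat_adjoint (1\<^sub>m n) = (1\<^sub>m n :: complex mat)"
  by (rule eq_matI) simp_all

lemma index_mult_mat_sum: "A \<in> carrier_mat a b \<Longrightarrow> B \<in> carrier_mat b c \<Longrightarrow> i < a \<Longrightarrow> j < c \<Longrightarrow>
  (A * B) $$ (i,j) = (\<Sum>k<b. A $$ (i,k) * B $$ (k,j))"
  by (auto simp: scalar_prod_def lessThan_atLeast0 intro!: sum.cong)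

lemma index_mult3_mat_sum:
  assumes "A \<in> carrier_mat a b" "B \<in> carrier_mat b c" "C \<in> carrier_mat c d" "i < a" "j < d"
  shows "(A * B * C) $$ (i,j) = (\<Sum>l<b. \<Sum>m<c. A $$ (i,l) * B $$ (l,m) * C $$ (m,j))"
proof -
  have "(A * B * C) $$ (i,j) = (\<Sum>m<c. (A*B) $$ (i,m) * C $$ (m,j))"
    using assms by (intro index_mult_mat_sum) auto
  also have "\<dots> = (\<Sum>m<c. \<Sum>l<b. A $$ (i,l) * B $$ (l,m) * C $$ (m,j))"
    using assms by (simp add: index_mult_mat_sum[of A a b B c] sum_distrib_right del: index_mult_mat)
  finally show ?thesis
    by (simp add: sum.swap[of _ "{..<c}"])
qed

lemma mat_adjoint_mult: "(A::complex mat) \<in> carrier_mat a b \<Longrightarrow> B \<in> carrier_mat b c \<Longrightarrow>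
   mat_adjoint (A*B) = mat_adjoint B * mat_adjoint A"
proof (rule eq_matI)
  assume A: "A \<in> carrier_mat a b" and B: "B \<in> carrier_mat b c"
  fix i j assume "i < dim_row (mat_adjoint B * mat_adjoint A)" "j < dim_col (mat_adjoint B * mat_adjoint A)"
  then have i: "i < c" and j: "j < a" using A B by auto
  have "mat_adjoint (A*B) $$ (i,j) = cnj ((A*B) $$ (j,i))"
    using A B i j by simp
  also have "\<dots> = cnj (\<Sum>k<b. A $$ (j,k) * B $$ (k,i))"
    by (simp add: index_mult_mat_sum[OF A B j i] del: index_mult_mat)
  also have "\<dots> = (mat_adjoint B * mat_adjoint A) $$ (i,j)"
    using A B i j by (simp add: index_mult_mat_sum[of _ c b _ a] mult.commute del: index_mult_mat)
  finally show "mat_adjoint (A*B) $$ (i,j) = (mat_adjoint B * mat_adjoint A) $$ (i,j)" .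
qed auto

lemma mat_adjoint_minus: "(A::complex mat) \<in> carrier_mat a b \<Longrightarrow> B \<in> carrier_mat a b \<Longrightarrow>
   mat_adjoint (A-B) = mat_adjoint A - mat_adjoint B"
  by (rule eq_matI) simp_all

lemma mat_adjoint_conj_hermitian:
  assumes "(L::complex mat) \<in> carrier_mat a b" "X \<in> carrier_mat b b" "mat_adjoint X = X"
  shows "mat_adjoint (L * X * mat_adjoint L) = L * X * mat_adjoint L"
proof -
  have L': "mat_adjoint L \<in> carrier_mat b a" and LX: "L * X \<in> carrier_mat a b"
    using assms by auto
  have "mat_adjoint (L * X * mat_adjoint L) = L * (X * mat_adjoint L)"
    using assms by (simp add: mat_adjoint_mult[OF LX L'] mat_adjoint_mult[OF assms(1,2)])
  then show ?thesis
    using assms by (simp add: assoc_mult_mat[OF assms(1,2) L'])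
qed

definition unitary :: "nat \<Rightarrow> complex mat \<Rightarrow> bool" where
  "unitary n U \<longleftrightarrow> U \<in> carrier_mat n n \<and> mat_adjoint U * U = 1\<^sub>m n"

lemma unitary_mult_adjoint: "unitary n U \<Longrightarrow> U * mat_adjoint U = 1\<^sub>m n"
  unfolding unitary_def by (auto intro: mat_mult_left_right_inverse[OF mat_adjoint_carrier])

lemma unitary_col_norm:
  assumes "unitary n U" "i < n"
  shows "(\<Sum>j<n. U $$ (j,i) * cnj (U $$ (j,i))) = 1"
proof -
  have U: "U \<in> carrier_mat n n" and "mat_adjoint U * U = 1\<^sub>m n"
    using assms(1) unfolding unitary_def by auto
  then have "(\<Sum>j<n. mat_adjoint U $$ (i,j) * U $$ (j,i)) = 1"
    using assms index_mult_mat_sum[OF mat_adjoint_carrier[OF U] U assms(2,2)] by simp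
  then show ?thesis
    using U assms by (simp add: mult.commute)
qed

lemma unitary_row_norm:
  assumes "unitary n U" "i < n"
  shows "(\<Sum>j<n. U $$ (i,j) * cnj (U $$ (i,j))) = 1"
proof -
  have U: "U \<in> carrier_mat n n"
    using assms(1) unfolding unitary_def by auto
  then have "(\<Sum>j<n. U $$ (i,j) * mat_adjoint U $$ (j,i)) = 1"
    using assms unitary_mult_adjoint[OF assms(1)] index_mult_mat_sum[OF U mat_adjoint_carrier[OF U] assms(2,2)]
    by simp
  then show ?thesis
    using U assms by simp
qed

lemma unitary_index_le_1:
  assumes "unitary n U" "j < n" "i < n"
  shows "cmod (U $$ (j,i)) \<le> 1"
proof -
  have "complex_of_real (\<Sum>j<n. (cmod (U $$ (j,i)))\<^sup>2) = 1"
    using unitary_col_norm[OF assms(1,3)] by (simp add: complex_norm_square[symmetric])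
  then have "(\<Sum>j<n. (cmod (U $$ (j,i)))\<^sup>2) = 1"
    using of_real_eq_1_iff by blast
  moreover have "(cmod (U $$ (j,i)))\<^sup>2 \<le> (\<Sum>j<n. (cmod (U $$ (j,i)))\<^sup>2)"
    using assms(2) by (intro member_le_sum) auto
  ultimately show ?thesis
    by (simp add: power_le_one_iff)
qed

lemma dim_row_kron[simp]: "dim_row (kron A B) = dim_row A * dim_row B"
  and dim_col_kron[simp]: "dim_col (kron A B) = dim_col A * dim_col B"
  unfolding kron_def by simp_all

lemma index_kron[simp]: "i < dim_row A * dim_row B \<Longrightarrow> j < dim_col A * dim_col B \<Longrightarrow>
  kron A B $$ (i,j) = A $$ (i div dim_row B, j div dim_col B) * B $$ (i mod dim_row B, j mod dim_col B)"
  unfolding kron_def by simp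

lemma kron_carrier: "A \<in> carrier_mat ra ca \<Longrightarrow> B \<in> carrier_mat rb cb \<Longrightarrow> kron A B \<in> carrier_mat (ra*rb) (ca*cb)"
  unfolding carrier_mat_def by simp

lemma index_kron_mult_add:
  assumes "A \<in> carrier_mat ra ca" "B \<in> carrier_mat rb cb" "i < ra" "k < rb" "j < ca" "l < cb"
  shows "kron A B $$ (i*rb+k, j*cb+l) = A $$ (i,j) * B $$ (k,l)"
  using assms mult_add_less_mult[of i ra k rb] mult_add_less_mult[of j ca l cb] by simp

lemma kron_mult:
  assumes A: "A \<in> carrier_mat ra ca" and B: "B \<in> carrier_mat rb cb"
    and C: "C \<in> carrier_mat ca cc" and D: "D \<in> carrier_mat cb cd"
  shows "kron A B * kron C D = kron (A*C) (B*D)"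
proof (rule eq_matI)
  fix i j assume "i < dim_row (kron (A*C) (B*D))" "j < dim_col (kron (A*C) (B*D))"
  then have i: "i < ra*rb" and j: "j < cc*cd" using A B C D by auto
  have "(kron A B * kron C D) $$ (i,j)
      = (\<Sum>a<ca. \<Sum>b<cb. kron A B $$ (i,a*cb+b) * kron C D $$ (a*cb+b,j))"
    using index_mult_mat_sum[OF kron_carrier[OF A B] kron_carrier[OF C D] i j] by (simp add: sum_lessThan_mult)
  also have "\<dots> = (\<Sum>a<ca. A $$ (i div rb, a) * C $$ (a, j div cd)) * (\<Sum>b<cb. B $$ (i mod rb, b) * D $$ (b, j mod cd))"
    using A B C D i j mult_add_less_mult[of _ ca _ cb]
    by (simp add: sum_product ac_simps)
  also have "\<dots> = (A*C) $$ (i div rb, j div cd) * (B*D) $$ (i mod rb, j mod cd)"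
    using index_mult_mat_sum[OF A C] index_mult_mat_sum[OF B D] less_mult_div_mod[OF i] less_mult_div_mod[OF j]
    by (simp del: index_mult_mat)
  also have "\<dots> = kron (A*C) (B*D) $$ (i,j)"
    using A B C D i j by simp
  finally show "(kron A B * kron C D) $$ (i,j) = kron (A*C) (B*D) $$ (i,j)" .
qed (use A B C D in simp_all)

lemma kron_one: "kron (1\<^sub>m a) (1\<^sub>m b) = (1\<^sub>m (a*b) :: complex mat)"
proof (rule eq_matI)
  fix i j assume "i < dim_row (1\<^sub>m (a*b) :: complex mat)" "j < dim_col (1\<^sub>m (a*b) :: complex mat)"
  then have "i < a*b" "j < a*b" by auto
  then show "kron (1\<^sub>m a) (1\<^sub>m b) $$ (i,j) = (1\<^sub>m (a*b) :: complex mat) $$ (i,j)"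
    using eq_iff_div_mod_eq[of i j b] less_mult_div_mod by simp
qed simp_all

lemma mat_adjoint_kron: "mat_adjoint (kron A B) = kron (mat_adjoint A) (mat_adjoint B)"
proof (rule eq_matI)
  fix i j assume "i < dim_row (kron (mat_adjoint A) (mat_adjoint B))"
    "j < dim_col (kron (mat_adjoint A) (mat_adjoint B))"
  then have i: "i < dim_col A * dim_col B" and j: "j < dim_row A * dim_row B" by simp_all
  show "mat_adjoint (kron A B) $$ (i,j) = kron (mat_adjoint A) (mat_adjoint B) $$ (i,j)"
    using i j less_mult_div_mod[OF i] less_mult_div_mod[OF j] by simp
qed simp_all

lemma mtrace_kron:
  assumes A: "A \<in> carrier_mat a a" and B: "B \<in> carrier_mat b b"
  shows "mtrace (kron A B) = mtrace A * mtrace B"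
proof -
  have "mtrace (kron A B) = (\<Sum>i<a. \<Sum>j<b. kron A B $$ (i*b+j,i*b+j))"
    using A B unfolding mtrace_def by (simp add: sum_lessThan_mult del: index_kron)
  also have "\<dots> = (\<Sum>i<a. \<Sum>j<b. A $$ (i,i) * B $$ (j,j))"
    using index_kron_mult_add[OF A B] by (intro sum.cong refl) simp
  finally show ?thesis
    using A B by (simp add: mtrace_def sum_product)
qed

lemma dephase_kron:
  assumes "A \<in> carrier_mat a a" "B \<in> carrier_mat b b"
  shows "dephase (a*b) (kron A B) = kron (dephase a A) (dephase b B)"
proof (rule eq_matI)
  fix i j assume "i < dim_row (kron (dephase a A) (dephase b B))" "j < dim_col (kron (dephase a A) (dephase b B))"
  then have "i < a*b" "j < a*b" by (simp_all add: dephase_def)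
  then show "dephase (a*b) (kron A B) $$ (i,j) = kron (dephase a A) (dephase b B) $$ (i,j)"
    using assms eq_iff_div_mod_eq[of i j b] less_mult_div_mod by (auto simp: dephase_def)
qed (simp_all add: dephase_def)

lemma hadamard_carrier: "hadamard \<in> carrier_mat 2 2"
  unfolding hadamard_def carrier_mat_def by simp

lemma sqrt2_mult_sqrt2: "complex_of_real (sqrt 2) * complex_of_real (sqrt 2) = 2"
  unfolding of_real_mult[symmetric] by simp

lemma hadamard_adjoint: "mat_adjoint hadamard = hadamard"
  by (rule eq_matI) (auto simp: hadamard_def)

lemma hadamard_square: "hadamard * hadamard = 1\<^sub>m 2"
proof (rule eq_matI)
  fix i j assume "i < dim_row (1\<^sub>m 2 :: complex mat)" "j < dim_col (1\<^sub>m 2 :: complex mat)"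
  then have i: "i < 2" and j: "j < 2" by auto
  have "(hadamard * hadamard) $$ (i,j) = hadamard $$ (i,0) * hadamard $$ (0,j) + hadamard $$ (i,1) * hadamard $$ (1,j)"
    by (simp add: index_mult_mat_sum[OF hadamard_carrier hadamard_carrier i j] numeral_2_eq_2 del: index_mult_mat)
  also have "\<dots> = (1\<^sub>m 2 :: complex mat) $$ (i,j)"
    using i j sqrt2_mult_sqrt2 less_2_cases[OF i] less_2_cases[OF j] by (auto simp: hadamard_def field_simps)
  finally show "(hadamard * hadamard) $$ (i,j) = (1\<^sub>m 2 :: complex mat) $$ (i,j)" .
qed (simp_all add: hadamard_def)

lemma hadamard_index_norm: "i < 2 \<Longrightarrow> j < 2 \<Longrightarrow> hadamard $$ (i,j) * cnj (hadamard $$ (i,j)) = 1/2"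
  using sqrt2_mult_sqrt2 by (auto simp: hadamard_def field_simps)

lemma hadamard_pow_carrier: "hadamard_pow n \<in> carrier_mat (2^n) (2^n)"
  by (induction n) (auto dest: kron_carrier[OF hadamard_carrier])

lemma hadamard_pow_adjoint: "mat_adjoint (hadamard_pow n) = hadamard_pow n"
  by (induction n) (simp_all add: mat_adjoint_kron hadamard_adjoint)

lemma hadamard_pow_square: "hadamard_pow n * hadamard_pow n = 1\<^sub>m (2^n)"
  by (induction n)
    (simp_all add: kron_mult[OF hadamard_carrier hadamard_pow_carrier hadamard_carrier hadamard_pow_carrier]
      hadamard_square kron_one)

lemma unitary_hadamard_pow: "unitary (2^n) (hadamard_pow n)"
  unfolding unitary_def using hadamard_pow_carrier hadamard_pow_square hadamard_pow_adjoint by simp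

lemma hadamard_pow_index_norm:
  "i < 2^n \<Longrightarrow> j < 2^n \<Longrightarrow> hadamard_pow n $$ (i,j) * cnj (hadamard_pow n $$ (i,j)) = 1/2^n"
proof (induction n arbitrary: i j)
  case (Suc n)
  have i: "i < 2 * 2^n" and j: "j < 2 * 2^n" using Suc.prems by auto
  have "hadamard_pow (Suc n) $$ (i,j) * cnj (hadamard_pow (Suc n) $$ (i,j)) =
     (hadamard $$ (i div 2^n, j div 2^n) * cnj (hadamard $$ (i div 2^n, j div 2^n))) *
     (hadamard_pow n $$ (i mod 2^n, j mod 2^n) * cnj (hadamard_pow n $$ (i mod 2^n, j mod 2^n)))"
    using i j hadamard_pow_carrier[of n] hadamard_carrier by (simp add: ac_simps)
  also have "\<dots> = 1/2 * (1/2^n)"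
    using hadamard_index_norm[of "i div 2^n" "j div 2^n"] Suc.IH[of "i mod 2^n" "j mod 2^n"]
      less_mult_div_mod[OF i] less_mult_div_mod[OF j] by (simp only:)
  finally show ?case by simp
qed simp

section \<open>Channels in Kraus form\<close>

lemma mat_sum_list_carrier: "(\<forall>M\<in>set Ms. M \<in> carrier_mat r c) \<Longrightarrow> mat_sum_list r c Ms \<in> carrier_mat r c"
  by (induction Ms) (auto simp: mat_sum_list_def)

lemma index_mat_sum_list:
  assumes "\<forall>M\<in>set Ms. M \<in> carrier_mat r c" "i < r" "j < c"
  shows "mat_sum_list r c Ms $$ (i,j) = (\<Sum>k<length Ms. (Ms ! k) $$ (i,j))"
proof -
  have "mat_sum_list r c Ms $$ (i,j) = sum_list (map (\<lambda>M. M $$ (i,j)) Ms)"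
    using assms
  proof (induction Ms)
    case (Cons M Ms)
    have "mat_sum_list r c Ms \<in> carrier_mat r c"
      using Cons.prems by (intro mat_sum_list_carrier) auto
    then show ?case
      using Cons by (simp add: mat_sum_list_def)
  qed (simp add: mat_sum_list_def)
  then show ?thesis
    by (simp add: sum_list_sum_nth lessThan_atLeast0)
qed

lemma mult_mat_adjoint_carrier:
  "(K::complex mat) \<in> carrier_mat a b \<Longrightarrow> X \<in> carrier_mat b b \<Longrightarrow> K * X * mat_adjoint K \<in> carrier_mat a a"
  by (meson mat_adjoint_carrier mult_carrier_mat)

lemma mat_adjoint_mult_carrier:
  "(K::complex mat) \<in> carrier_mat a b \<Longrightarrow> mat_adjoint K * K \<in> carrier_mat b b"
  by (meson mat_adjoint_carrier mult_carrier_mat)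

lemma mat_adjoint_add: "(A::complex mat) \<in> carrier_mat a b \<Longrightarrow> B \<in> carrier_mat a b \<Longrightarrow>
   mat_adjoint (A+B) = mat_adjoint A + mat_adjoint B"
  by (rule eq_matI) simp_all

lemma mat_sum_list_adjoint:
  "(\<forall>M\<in>set Ms. M \<in> carrier_mat r r \<and> mat_adjoint M = M) \<Longrightarrow>
   mat_adjoint (mat_sum_list r r Ms) = mat_sum_list r r Ms"
proof (induction Ms)
  case Nil
  show ?case by (rule eq_matI) (simp_all add: mat_sum_list_def)
next
  case (Cons M Ms)
  have "mat_sum_list r r Ms \<in> carrier_mat r r"
    using Cons.prems by (intro mat_sum_list_carrier) auto
  then show ?case
    using Cons by (simp add: mat_sum_list_def mat_adjoint_add[of M r r])
qed

lemma kraus_map_index: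
  assumes Ks: "\<forall>K\<in>set Ks. K \<in> carrier_mat dout din" and X: "X \<in> carrier_mat din din"
    and i: "i < dout" and j: "j < dout"
  shows "mat_sum_list dout dout (map (\<lambda>K. K * X * mat_adjoint K) Ks) $$ (i,j) =
     (\<Sum>k<length Ks. \<Sum>l<din. \<Sum>m<din. (Ks!k) $$ (i,l) * X $$ (l,m) * cnj ((Ks!k) $$ (j,m)))"
proof -
  have "\<forall>M\<in>set (map (\<lambda>K. K * X * mat_adjoint K) Ks). M \<in> carrier_mat dout dout"
    using Ks X mult_mat_adjoint_carrier by auto
  moreover have "(Ks!k * X * mat_adjoint (Ks!k)) $$ (i,j)
      = (\<Sum>l<din. \<Sum>m<din. (Ks!k) $$ (i,l) * X $$ (l,m) * cnj ((Ks!k) $$ (j,m)))" if "k < length Ks" for k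
  proof -
    have K: "Ks!k \<in> carrier_mat dout din" using Ks that by auto
    show ?thesis
      using K j by (simp add: index_mult3_mat_sum[OF K X mat_adjoint_carrier[OF K] i j])
  qed
  ultimately show ?thesis
    using i j by (simp add: index_mat_sum_list)
qed

lemma kraus_completeness_index:
  assumes Ks: "\<forall>K\<in>set Ks. K \<in> carrier_mat dout din"
    and norm: "mat_sum_list din din (map (\<lambda>K. mat_adjoint K * K) Ks) = 1\<^sub>m din"
    and m: "m < din" and l: "l < din"
  shows "(\<Sum>k<length Ks. \<Sum>i<dout. cnj ((Ks!k) $$ (i,m)) * (Ks!k) $$ (i,l)) = (if m = l then 1 else 0)"
proof -
  have "\<forall>M\<in>set (map (\<lambda>K. mat_adjoint K * K) Ks). M \<in> carrier_mat din din"
    using Ks mat_adjoint_mult_carrier by auto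
  moreover have "(mat_adjoint (Ks!k) * Ks!k) $$ (m,l) = (\<Sum>i<dout. cnj ((Ks!k) $$ (i,m)) * (Ks!k) $$ (i,l))"
    if "k < length Ks" for k
  proof -
    have K: "Ks!k \<in> carrier_mat dout din" using Ks that by auto
    show ?thesis
      using K m by (simp add: index_mult_mat_sum[OF mat_adjoint_carrier[OF K] K m l] del: index_mult_mat)
  qed
  ultimately show ?thesis
    using arg_cong[OF norm, of "\<lambda>M. M $$ (m,l)"] m l by (simp add: index_mat_sum_list)
qed

lemma kraus_map_mtrace:
  assumes Ks: "\<forall>K\<in>set Ks. K \<in> carrier_mat dout din"
    and norm: "mat_sum_list din din (map (\<lambda>K. mat_adjoint K * K) Ks) = 1\<^sub>m din"
    and X: "X \<in> carrier_mat din din"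
  shows "mtrace (mat_sum_list dout dout (map (\<lambda>K. K * X * mat_adjoint K) Ks)) = mtrace X"
proof -
  have "mat_sum_list dout dout (map (\<lambda>K. K * X * mat_adjoint K) Ks) \<in> carrier_mat dout dout"
    using Ks X mult_mat_adjoint_carrier by (intro mat_sum_list_carrier) auto
  then have "mtrace (mat_sum_list dout dout (map (\<lambda>K. K * X * mat_adjoint K) Ks)) =
     (\<Sum>i<dout. \<Sum>k<length Ks. \<Sum>l<din. \<Sum>m<din. (Ks!k) $$ (i,l) * X $$ (l,m) * cnj ((Ks!k) $$ (i,m)))"
    using kraus_map_index[OF Ks X] by (simp add: mtrace_def)
  also have "\<dots> = (\<Sum>l<din. \<Sum>m<din. X $$ (l,m) * (\<Sum>k<length Ks. \<Sum>i<dout. cnj ((Ks!k) $$ (i,m)) * (Ks!k) $$ (i,l)))"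
  proof -
    have "(\<Sum>i<dout. \<Sum>k<length Ks. \<Sum>l<din. \<Sum>m<din. (Ks!k) $$ (i,l) * X $$ (l,m) * cnj ((Ks!k) $$ (i,m)))
      = (\<Sum>k<length Ks. \<Sum>i<dout. \<Sum>l<din. \<Sum>m<din. (Ks!k) $$ (i,l) * X $$ (l,m) * cnj ((Ks!k) $$ (i,m)))"
      by (rule sum.swap)
    also have "\<dots> = (\<Sum>k<length Ks. \<Sum>l<din. \<Sum>m<din. \<Sum>i<dout. (Ks!k) $$ (i,l) * X $$ (l,m) * cnj ((Ks!k) $$ (i,m)))"
      by (simp add: sum.swap[of _ "{..<dout}"])
    also have "\<dots> = (\<Sum>l<din. \<Sum>m<din. \<Sum>k<length Ks. \<Sum>i<dout. (Ks!k) $$ (i,l) * X $$ (l,m) * cnj ((Ks!k) $$ (i,m)))"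
      by (simp add: sum.swap[of _ "{..<length Ks}"])
    finally show ?thesis
      by (simp add: sum_distrib_left ac_simps)
  qed
  also have "\<dots> = (\<Sum>l<din. \<Sum>m<din. X $$ (l,m) * (if m = l then 1 else 0))"
    by (simp add: kraus_completeness_index[OF Ks norm])
  also have "\<dots> = (\<Sum>l<din. X $$ (l,l))"
    by (simp add: if_distrib cong: if_cong)
  also have "\<dots> = mtrace X"
    using X by (simp add: mtrace_def)
  finally show ?thesis .
qed

lemma kraus_map_index_bound:
  assumes Ks: "\<forall>K\<in>set Ks. K \<in> carrier_mat dout din" and X: "X \<in> carrier_mat din din"
    and Xb: "\<forall>l<din. \<forall>m<din. cmod (X $$ (l,m)) \<le> 1"
    and i: "i < dout" and j: "j < dout"
  shows "cmod (mat_sum_list dout dout (map (\<lambda>K. K * X * mat_adjoint K) Ks) $$ (i,j)) \<le>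
     (\<Sum>k<length Ks. \<Sum>l<din. \<Sum>m<din. cmod ((Ks!k) $$ (i,l)) * cmod ((Ks!k) $$ (j,m)))"
proof -
  have "cmod (\<Sum>k<length Ks. \<Sum>l<din. \<Sum>m<din. (Ks!k) $$ (i,l) * X $$ (l,m) * cnj ((Ks!k) $$ (j,m)))
    \<le> (\<Sum>k<length Ks. \<Sum>l<din. \<Sum>m<din. cmod ((Ks!k) $$ (i,l) * X $$ (l,m) * cnj ((Ks!k) $$ (j,m))))"
  proof -
    have "cmod (\<Sum>k<length Ks. \<Sum>l<din. \<Sum>m<din. (Ks!k) $$ (i,l) * X $$ (l,m) * cnj ((Ks!k) $$ (j,m)))
      \<le> (\<Sum>k<length Ks. \<Sum>l<din. cmod (\<Sum>m<din. (Ks!k) $$ (i,l) * X $$ (l,m) * cnj ((Ks!k) $$ (j,m))))"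
      by (rule order.trans[OF norm_sum]) (intro sum_mono norm_sum)
    also have "\<dots> \<le> (\<Sum>k<length Ks. \<Sum>l<din. \<Sum>m<din. cmod ((Ks!k) $$ (i,l) * X $$ (l,m) * cnj ((Ks!k) $$ (j,m))))"
      by (intro sum_mono norm_sum)
    finally show ?thesis .
  qed
  also have "\<dots> \<le> (\<Sum>k<length Ks. \<Sum>l<din. \<Sum>m<din. cmod ((Ks!k) $$ (i,l)) * cmod ((Ks!k) $$ (j,m)))"
  proof (intro sum_mono)
    fix k l m assume "l \<in> {..<din}" "m \<in> {..<din}"
    then have "cmod (X $$ (l,m)) \<le> 1" using Xb by auto
    then show "cmod ((Ks!k) $$ (i,l) * X $$ (l,m) * cnj ((Ks!k) $$ (j,m))) \<le> cmod ((Ks!k) $$ (i,l)) * cmod ((Ks!k) $$ (j,m))"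
      by (simp add: norm_mult mult_left_le_one_le mult_right_le_one_le mult.assoc mult_left_mono)
  qed
  finally show ?thesis
    by (simp add: kraus_map_index[OF Ks X i j])
qed

lemma channel_carrier: "channel din dout E \<Longrightarrow> X \<in> carrier_mat din din \<Longrightarrow> E X \<in> carrier_mat dout dout"
  unfolding channel_def using mult_mat_adjoint_carrier by (fastforce intro!: mat_sum_list_carrier)

lemma channel_mtrace: "channel din dout E \<Longrightarrow> X \<in> carrier_mat din din \<Longrightarrow> mtrace (E X) = mtrace X"
  unfolding channel_def using kraus_map_mtrace by auto

lemma channel_adjoint:
  assumes "channel din dout E" "X \<in> carrier_mat din din" "mat_adjoint X = X"
  shows "mat_adjoint (E X) = E X"
proof -
  obtain Ks where Ks: "\<forall>K\<in>set Ks. K \<in> carrier_mat dout din"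
    and E: "E X = mat_sum_list dout dout (map (\<lambda>K. K * X * mat_adjoint K) Ks)"
    using assms unfolding channel_def by blast
  have "\<forall>M\<in>set (map (\<lambda>K. K * X * mat_adjoint K) Ks). M \<in> carrier_mat dout dout \<and> mat_adjoint M = M"
    using Ks assms(2,3) mult_mat_adjoint_carrier mat_adjoint_conj_hermitian by auto
  then show ?thesis
    unfolding E by (rule mat_sum_list_adjoint)
qed

lemma channel_index_bound:
  assumes "channel din dout E"
  obtains c where "\<And>X i j. X \<in> carrier_mat din din \<Longrightarrow> \<forall>l<din. \<forall>m<din. cmod (X $$ (l,m)) \<le> 1 \<Longrightarrow>
    i < dout \<Longrightarrow> j < dout \<Longrightarrow> cmod (E X $$ (i,j)) \<le> c"
proof -
  obtain Ks where Ks: "\<forall>K\<in>set Ks. K \<in> carrier_mat dout din"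
    and E: "\<forall>X \<in> carrier_mat din din. E X = mat_sum_list dout dout (map (\<lambda>K. K * X * mat_adjoint K) Ks)"
    using assms unfolding channel_def by blast
  define b where "b i j = (\<Sum>k<length Ks. \<Sum>l<din. \<Sum>m<din. cmod ((Ks!k) $$ (i,l)) * cmod ((Ks!k) $$ (j,m)))" for i j
  have b_nonneg: "0 \<le> b i j" for i j
    by (simp add: b_def sum_nonneg)
  have "b i j \<le> (\<Sum>i<dout. \<Sum>j<dout. b i j)" if "i < dout" "j < dout" for i j
  proof -
    have "b i j \<le> (\<Sum>j<dout. b i j)"
      using that b_nonneg by (intro member_le_sum) auto
    also have "\<dots> \<le> (\<Sum>i<dout. \<Sum>j<dout. b i j)"
      using that b_nonneg by (intro member_le_sum[of i]) (auto intro: sum_nonneg)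
    finally show ?thesis .
  qed
  moreover have "cmod (E X $$ (i,j)) \<le> b i j"
    if "X \<in> carrier_mat din din" "\<forall>l<din. \<forall>m<din. cmod (X $$ (l,m)) \<le> 1" "i < dout" "j < dout" for X i j
    using kraus_map_index_bound[OF Ks that] E that(1) unfolding b_def by simp
  ultimately show ?thesis
    by (intro that[of "\<Sum>i<dout. \<Sum>j<dout. b i j"]) (meson order.trans)
qed

lemma channel_unitary_conj:
  assumes "unitary n U"
  shows "channel n n (\<lambda>X. U * X * mat_adjoint U)"
  unfolding channel_def
proof (intro exI[of _ "[U]"] conjI ballI)
  fix X :: "complex mat" assume "X \<in> carrier_mat n n"
  then have "U * X * mat_adjoint U \<in> carrier_mat n n"
    using assms mult_mat_adjoint_carrier unfolding unitary_def by blast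
  then show "U * X * mat_adjoint U = mat_sum_list n n (map (\<lambda>K. K * X * mat_adjoint K) [U])"
    by (simp add: mat_sum_list_def)
qed (use assms in \<open>simp_all add: mat_sum_list_def unitary_def\<close>)

section \<open>Spectral theorem for Hermitian matrices\<close>

text \<open>For \<open>w = 0\<close> the coefficient is \<open>2 / 0 = 0\<close>, so the matrix is the identity and the lemmas
  below need no hypothesis on \<open>w\<close>.\<close>

definition householder :: "nat \<Rightarrow> (nat \<Rightarrow> complex) \<Rightarrow> complex mat" where
  "householder n w = mat n n (\<lambda>(i,j).
     (if i = j then 1 else 0) - 2 / (\<Sum>l<n. w l * cnj (w l)) * w i * cnj (w j))"

lemma sum_delta_left: "(i::nat) < n \<Longrightarrow> (\<Sum>k<n. (if i = k then 1 else 0) * f k) = (f i :: complex)"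
  by (simp add: if_distrib[of "\<lambda>x. x * _"] sum.delta cong: if_cong)

lemma sum_delta_right: "(j::nat) < n \<Longrightarrow> (\<Sum>k<n. f k * (if k = j then 1 else 0)) = (f j :: complex)"
  by (simp add: if_distrib[of "\<lambda>x. _ * x"] sum.delta' cong: if_cong)

lemma householder_adjoint: "mat_adjoint (householder n w) = householder n w"
  by (rule eq_matI) (auto simp: householder_def cnj_sum mult.commute)

lemma householder_square: "householder n w * householder n w = 1\<^sub>m n"
proof (rule eq_matI)
  define s where "s = (\<Sum>l<n. w l * cnj (w l))"
  define c where "c = 2 / s"
  have W: "householder n w \<in> carrier_mat n n" and
    W_index: "\<And>i j. i < n \<Longrightarrow> j < n \<Longrightarrow> householder n w $$ (i,j) = (if i = j then 1 else 0) - c * w i * cnj (w j)"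
    by (simp_all add: householder_def c_def s_def)
  have c: "c * c * s = 2 * c"
    by (cases "s = 0") (simp_all add: c_def field_simps)
  fix i j assume "i < dim_row (1\<^sub>m n :: complex mat)" "j < dim_col (1\<^sub>m n :: complex mat)"
  then have i: "i < n" and j: "j < n" by auto
  have "(householder n w * householder n w) $$ (i,j) = (\<Sum>l<n. (if i = l then 1 else 0) * (if l = j then 1 else 0)
      - (if i = l then 1 else 0) * (c * w l * cnj (w j))
      - (c * w i * cnj (w l)) * (if l = j then 1 else 0)
      + (c * c * w i * cnj (w j)) * (w l * cnj (w l)))"
    using i j by (simp add: index_mult_mat_sum[OF W W i j] W_index algebra_simps del: index_mult_mat)
  also have "\<dots> = (if i = j then 1 else 0) - c * w i * cnj (w j) - c * w i * cnj (w j)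
      + c * c * w i * cnj (w j) * s"
    using i j by (simp add: sum.distrib sum_subtractf sum_delta_left sum_delta_right
        sum_distrib_left[symmetric] s_def)
  also have "\<dots> = (if i = j then 1 else 0)"
  proof -
    have "c * c * w i * cnj (w j) * s = (c * c * s) * w i * cnj (w j)"
      by (simp add: ac_simps)
    then show ?thesis
      using c by simp
  qed
  finally show "(householder n w * householder n w) $$ (i,j) = (1\<^sub>m n :: complex mat) $$ (i,j)"
    using i j by simp
qed (simp_all add: householder_def)

text \<open>Taking \<open>\<phi>\<close> to be the phase of \<open>u\<^sub>0\<close> makes the reflection send the first basis vector to a
  phase multiple of \<open>u\<close>.\<close>

lemma householder_first_column:
  fixes u :: "nat \<Rightarrow> complex"
  assumes u: "(\<Sum>i<Suc k. u i * cnj (u i)) = 1"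
  obtains \<phi> where "\<forall>i<Suc k. householder (Suc k) (\<lambda>i. (if i = 0 then \<phi> else 0) - u i) $$ (i,0) = cnj \<phi> * u i"
proof -
  define a where "a = u 0"
  define r where "r = cmod a"
  define \<phi> where "\<phi> = (if a = 0 then 1 else a / complex_of_real r)"
  define w where "w i = (if i = 0 then \<phi> else 0) - u i" for i
  define s where "s = (\<Sum>i<Suc k. w i * cnj (w i))"
  have \<phi>: "\<phi> * cnj \<phi> = 1"
    using complex_norm_square[of a] by (auto simp: \<phi>_def r_def field_simps power2_eq_square)
  have cnj_a: "cnj a = cnj \<phi> * complex_of_real r"
    by (auto simp: \<phi>_def r_def)
  then have \<phi>_a: "\<phi> * cnj a = complex_of_real r" and \<phi>_a': "cnj \<phi> * a = complex_of_real r"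
    using \<phi> by (metis mult.assoc mult_1, metis \<phi> complex_cnj_cnj complex_cnj_complex_of_real complex_cnj_mult mult.assoc mult_1)
  have u_split: "a * cnj a + (\<Sum>i<k. u (Suc i) * cnj (u (Suc i))) = 1"
    using u unfolding sum.lessThan_Suc_shift a_def by simp
  have "s = w 0 * cnj (w 0) + (\<Sum>i<k. u (Suc i) * cnj (u (Suc i)))"
    unfolding s_def sum.lessThan_Suc_shift by (simp add: w_def)
  moreover have "w 0 * cnj (w 0) = \<phi> * cnj \<phi> - \<phi> * cnj a - cnj \<phi> * a + a * cnj a"
    by (simp add: w_def a_def algebra_simps)
  ultimately have s: "s = 2 - 2 * complex_of_real r"
    using u_split \<phi> \<phi>_a \<phi>_a' by (simp add: algebra_simps)
  have W_index: "householder (Suc k) w $$ (i,0) = (if i = 0 then 1 else 0) - 2 / s * w i * cnj (w 0)"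
    if "i < Suc k" for i
    using that by (simp add: householder_def s_def)
  have "householder (Suc k) w $$ (i,0) = cnj \<phi> * u i" if i: "i < Suc k" for i
  proof (cases "r = 1")
    case False
    then have "s \<noteq> 0"
      using s by auto
    moreover have w0: "cnj (w 0) = cnj \<phi> * (1 - complex_of_real r)"
      using cnj_a by (simp add: w_def a_def algebra_simps)
    ultimately have key: "2 / s * cnj (w 0) = cnj \<phi>"
      using False unfolding s w0 by (simp add: field_simps)
    have "householder (Suc k) w $$ (i,0) = (if i = 0 then 1 else 0) - w i * (2 / s * cnj (w 0))"
      using i by (simp add: W_index ac_simps)
    also have "\<dots> = (if i = 0 then 1 else 0) - w i * cnj \<phi>"
      unfolding key ..
    also have "\<dots> = cnj \<phi> * u i"
      using \<phi> by (cases "i = 0") (simp_all add: w_def algebra_simps)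
    finally show ?thesis .
  next
    case True
    have "(\<Sum>i<k. u (Suc i) * cnj (u (Suc i))) = 0"
      using u_split True complex_norm_square[of a] unfolding r_def by simp
    then have "(\<Sum>i<k. complex_of_real ((cmod (u (Suc i)))\<^sup>2)) = 0"
      by (simp only: complex_norm_square)
    then have "(\<Sum>i<k. (cmod (u (Suc i)))\<^sup>2) = 0"
      by (simp only: of_real_sum[symmetric] of_real_eq_0_iff)
    then have "\<forall>i<k. u (Suc i) = 0"
      by (subst (asm) sum_nonneg_eq_0_iff) auto
    then show ?thesis
      using i s True \<phi>_a' by (auto simp: W_index a_def less_Suc_eq_0_disj)
  qed
  then show ?thesis
    using that unfolding w_def by blast
qed

lemma exists_unit_eigenvector:
  assumes A: "A \<in> carrier_mat n n" and n: "0 < n"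
  obtains e u where "(\<Sum>i<n. u i * cnj (u i)) = 1" "\<forall>i<n. (\<Sum>j<n. A $$ (i,j) * u j) = e * u i"
proof -
  obtain as where cp: "char_poly A = (\<Prod>a\<leftarrow>as. [:- a, 1:])" and "length as = n"
    using char_poly_factorized[OF A] by blast
  then obtain e rest where "as = e # rest"
    using n by (cases as) auto
  then have "eigenvalue A e"
    using eigenvalue_root_char_poly[OF A] cp by simp
  then obtain v where "eigenvector A v e"
    unfolding eigenvalue_def by blast
  then have v: "v \<in> carrier_vec n" and v0: "v \<noteq> 0\<^sub>v n" and Av: "A *\<^sub>v v = e \<cdot>\<^sub>v v"
    unfolding eigenvector_def using A by auto
  obtain i0 where i0: "i0 < n" "v $ i0 \<noteq> 0"
    using v v0 by (metis carrier_vecD eq_vecI index_zero_vec(1) index_zero_vec(2))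
  define nv where "nv = (\<Sum>i<n. (cmod (v $ i))\<^sup>2)"
  have "(cmod (v $ i0))\<^sup>2 \<le> nv"
    unfolding nv_def using i0 by (intro member_le_sum) auto
  moreover have "(cmod (v $ i0))\<^sup>2 > 0"
    using i0 by simp
  ultimately have nv: "nv > 0" by linarith
  define c where "c = complex_of_real (sqrt nv)"
  define u where "u i = v $ i / c" for i
  have "(\<Sum>i<n. v $ i * cnj (v $ i)) = complex_of_real nv"
    unfolding nv_def of_real_sum by (intro sum.cong refl) (rule complex_norm_square[symmetric])
  moreover have "c * cnj c = complex_of_real nv"
    using nv by (simp add: c_def flip: of_real_mult)
  moreover have "(\<Sum>i<n. u i * cnj (u i)) = (\<Sum>i<n. v $ i * cnj (v $ i)) / (c * cnj c)"
    by (simp add: u_def sum_divide_distrib)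
  ultimately have "(\<Sum>i<n. u i * cnj (u i)) = 1"
    using nv by simp
  moreover have "(\<Sum>j<n. A $$ (i,j) * u j) = e * u i" if i: "i < n" for i
  proof -
    have "(\<Sum>j<n. A $$ (i,j) * v $ j) = e * v $ i"
      using arg_cong[OF Av, of "\<lambda>x. x $ i"] i A v by (simp add: scalar_prod_def lessThan_atLeast0)
    then show ?thesis
      by (simp add: u_def sum_divide_distrib[symmetric])
  qed
  ultimately show ?thesis
    using that by blast
qed

lemma unitary_mult:
  assumes "unitary n U" "unitary n V"
  shows "unitary n (U * V)"
proof -
  have U: "U \<in> carrier_mat n n" and V: "V \<in> carrier_mat n n"
    and UU: "mat_adjoint U * U = 1\<^sub>m n" and VV: "mat_adjoint V * V = 1\<^sub>m n"
    using assms unfolding unitary_def by auto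
  have "mat_adjoint (U * V) * (U * V) = mat_adjoint V * ((mat_adjoint U * U) * V)"
    using U V by (simp add: mat_adjoint_mult[OF U V] assoc_mult_mat[of _ n n _ n _ n])
  then show ?thesis
    using U V UU VV unfolding unitary_def by simp
qed

lemma sum_lessThan_Suc_Suc:
  "(\<Sum>l<Suc k. \<Sum>m<Suc k. (f l m :: complex)) = f 0 0 + (\<Sum>m<k. f 0 (Suc m)) +
     (\<Sum>l<k. f (Suc l) 0) + (\<Sum>l<k. \<Sum>m<k. f (Suc l) (Suc m))"
  by (simp add: sum.lessThan_Suc_shift sum.distrib del: sum.lessThan_Suc)

lemma less_Suc_cases: "(i::nat) < Suc k \<Longrightarrow> i = 0 \<or> (\<exists>i'. i = Suc i' \<and> i' < k)"
  by (cases i) auto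

text \<open>\<open>W\<close> is a Householder reflection taking the first basis vector to an eigenvector of \<open>A\<close>.\<close>

lemma hermitian_deflation:
  assumes A: "A \<in> carrier_mat (Suc k) (Suc k)"
  obtains W e where "unitary (Suc k) W" "mat_adjoint W = W"
    "\<forall>i<Suc k. (W * A * W) $$ (i,0) = (if i = 0 then e else 0)"
proof -
  let ?n = "Suc k"
  obtain e u where u: "(\<Sum>i<?n. u i * cnj (u i)) = 1" and eig: "\<forall>i<?n. (\<Sum>j<?n. A $$ (i,j) * u j) = e * u i"
    using exists_unit_eigenvector[OF A] by blast
  obtain \<phi> where col: "\<forall>i<?n. householder ?n (\<lambda>i. (if i = 0 then \<phi> else 0) - u i) $$ (i,0) = cnj \<phi> * u i"
    using householder_first_column[OF u] by blast
  define W where "W = householder ?n (\<lambda>i. (if i = 0 then \<phi> else 0) - u i)"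
  have W: "W \<in> carrier_mat ?n ?n"
    unfolding W_def householder_def by simp
  have W_adj: "mat_adjoint W = W" and WW: "W * W = 1\<^sub>m ?n"
    unfolding W_def by (rule householder_adjoint, rule householder_square)
  have AW: "(\<Sum>m<?n. A $$ (l,m) * W $$ (m,0)) = e * W $$ (l,0)" if "l < ?n" for l
    using col eig that unfolding W_def by (simp add: sum_distrib_left[symmetric] ac_simps)
  have "(W * A * W) $$ (i,0) = (if i = 0 then e else 0)" if i: "i < ?n" for i
  proof -
    have "(W * A * W) $$ (i,0) = (\<Sum>l<?n. W $$ (i,l) * (\<Sum>m<?n. A $$ (l,m) * W $$ (m,0)))"
      using index_mult3_mat_sum[OF W A W i] by (simp add: sum_distrib_left ac_simps del: sum.lessThan_Suc)
    also have "\<dots> = e * (W * W) $$ (i,0)"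
      using AW by (simp add: index_mult_mat_sum[OF W W i] sum_distrib_left ac_simps
          del: index_mult_mat sum.lessThan_Suc)
    finally show ?thesis
      using WW i by simp
  qed
  then show ?thesis
    using that W W_adj WW unfolding unitary_def by simp
qed

definition block_diag_one :: "nat \<Rightarrow> complex mat \<Rightarrow> complex mat" where
  "block_diag_one k U = mat (Suc k) (Suc k)
     (\<lambda>(i,j). if i = 0 \<and> j = 0 then 1 else if i = 0 \<or> j = 0 then 0 else U $$ (i - 1, j - 1))"

lemma block_diag_one_carrier: "block_diag_one k U \<in> carrier_mat (Suc k) (Suc k)"
  and block_diag_one_index:
    "block_diag_one k U $$ (0,0) = 1"
    "j < k \<Longrightarrow> block_diag_one k U $$ (0, Suc j) = 0"
    "i < k \<Longrightarrow> block_diag_one k U $$ (Suc i, 0) = 0"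
    "i < k \<Longrightarrow> j < k \<Longrightarrow> block_diag_one k U $$ (Suc i, Suc j) = U $$ (i, j)"
  unfolding block_diag_one_def by auto

lemma unitary_block_diag_one:
  assumes U: "unitary k U"
  shows "unitary (Suc k) (block_diag_one k U)"
proof -
  let ?n = "Suc k" and ?V = "block_diag_one k U"
  have Uc: "U \<in> carrier_mat k k" and UU: "mat_adjoint U * U = 1\<^sub>m k"
    using U unfolding unitary_def by auto
  note V = block_diag_one_carrier[of k U]
  have "(mat_adjoint ?V * ?V) $$ (i,j) = (1\<^sub>m ?n :: complex mat) $$ (i,j)" if i: "i < ?n" and j: "j < ?n" for i j
  proof -
    have "(mat_adjoint ?V * ?V) $$ (i,j) = cnj (?V $$ (0,i)) * ?V $$ (0,j) + (\<Sum>l<k. cnj (?V $$ (Suc l,i)) * ?V $$ (Suc l,j))"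
      using V i j by (simp add: index_mult_mat_sum[OF mat_adjoint_carrier[OF V] V i j] sum.lessThan_Suc_shift
          del: index_mult_mat sum.lessThan_Suc)
    also have "\<dots> = (1\<^sub>m ?n :: complex mat) $$ (i,j)"
    proof -
      consider "i = 0" "j = 0" | j' where "i = 0" "j = Suc j'" "j' < k" | i' where "i = Suc i'" "i' < k" "j = 0"
        | i' j' where "i = Suc i'" "i' < k" "j = Suc j'" "j' < k"
        using less_Suc_cases[OF i] less_Suc_cases[OF j] by blast
      then show ?thesis
      proof cases
        case 4
        have "(\<Sum>l<k. cnj (?V $$ (Suc l,i)) * ?V $$ (Suc l,j)) = (mat_adjoint U * U) $$ (i',j')"
          using 4 Uc by (simp add: index_mult_mat_sum[OF mat_adjoint_carrier[OF Uc] Uc] block_diag_one_index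
              del: index_mult_mat)
        then show ?thesis
          using 4 UU by (simp add: block_diag_one_index)
      qed (simp_all add: block_diag_one_index)
    qed
    finally show ?thesis .
  qed
  then show ?thesis
    using V unfolding unitary_def by (intro conjI eq_matI) auto
qed

lemma diagonal_mat_conj_block_diag_one:
  assumes A: "A \<in> carrier_mat (Suc k) (Suc k)" "mat_adjoint A = A"
    and col: "\<forall>i<k. A $$ (Suc i, 0) = 0"
    and U: "unitary k U" and D: "diagonal_mat (mat_adjoint U * mat k k (\<lambda>(i,j). A $$ (Suc i, Suc j)) * U)"
  shows "diagonal_mat (mat_adjoint (block_diag_one k U) * A * block_diag_one k U)"
proof -
  let ?n = "Suc k" and ?V = "block_diag_one k U"
  define B where "B = mat k k (\<lambda>(i,j). A $$ (Suc i, Suc j))"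
  have B: "B \<in> carrier_mat k k" and Uc: "U \<in> carrier_mat k k"
    using U unfolding B_def unitary_def by auto
  note V = block_diag_one_carrier[of k U]
  note V0j = block_diag_one_index(2)[of _ k U] and Vi0 = block_diag_one_index(3)[of _ k U]
    and Vij = block_diag_one_index(4)[of _ k _ U]
  have row: "A $$ (0, Suc j) = 0" if "j < k" for j
    using arg_cong[OF A(2), of "\<lambda>M. M $$ (0, Suc j)"] col A(1) that by simp
  have "(mat_adjoint ?V * A * ?V) $$ (i,j) = 0" if i: "i < ?n" and j: "j < ?n" and ij: "i \<noteq> j" for i j
  proof -
    have "(mat_adjoint ?V * A * ?V) $$ (i,j) = (\<Sum>l<?n. \<Sum>m<?n. cnj (?V $$ (l,i)) * A $$ (l,m) * ?V $$ (m,j))"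
      using V i j by (simp add: index_mult3_mat_sum[OF mat_adjoint_carrier[OF V] A(1) V i j])
    also have "\<dots> = cnj (?V $$ (0,i)) * A $$ (0,0) * ?V $$ (0,j) + 0 + 0 +
        (\<Sum>l<k. \<Sum>m<k. cnj (?V $$ (Suc l,i)) * A $$ (Suc l,Suc m) * ?V $$ (Suc m,j))"
      unfolding sum_lessThan_Suc_Suc using row col by (simp add: sum.neutral del: sum.lessThan_Suc)
    also have "\<dots> = cnj (?V $$ (0,i)) * (A $$ (0,0) * ?V $$ (0,j)) +
        (\<Sum>l<k. \<Sum>m<k. cnj (?V $$ (Suc l,i)) * A $$ (Suc l,Suc m) * ?V $$ (Suc m,j))"
      by (simp add: ac_simps)
    also have "\<dots> = 0"
    proof -
      consider j' where "i = 0" "j = Suc j'" "j' < k" | i' where "i = Suc i'" "i' < k" "j = 0"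
        | i' j' where "i = Suc i'" "i' < k" "j = Suc j'" "j' < k" "i' \<noteq> j'"
        using less_Suc_cases[OF i] less_Suc_cases[OF j] ij by blast
      then show ?thesis
      proof cases
        case 3
        have "(\<Sum>l<k. \<Sum>m<k. cnj (?V $$ (Suc l,i)) * A $$ (Suc l,Suc m) * ?V $$ (Suc m,j))
            = (\<Sum>l<k. \<Sum>m<k. mat_adjoint U $$ (i',l) * B $$ (l,m) * U $$ (m,j'))"
          using 3 Vij Uc by (intro sum.cong refl) (simp add: B_def)
        also have "\<dots> = (mat_adjoint U * B * U) $$ (i',j')"
          using 3 by (intro index_mult3_mat_sum[symmetric, OF mat_adjoint_carrier[OF Uc] B Uc])
        also have "\<dots> = 0"
          using D[folded B_def] 3 Uc B unfolding diagonal_mat_def by simp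
        finally show ?thesis
          using 3 V0j by simp
      qed (use V0j Vi0 in simp_all)
    qed
    finally show ?thesis .
  qed
  then show ?thesis
    using V A unfolding diagonal_mat_def by simp
qed

theorem hermitian_unitarily_diagonalizable:
  assumes "A \<in> carrier_mat n n" "mat_adjoint A = A"
  obtains U where "unitary n U" "diagonal_mat (mat_adjoint U * A * U)"
proof -
  have "\<exists>U. unitary n U \<and> diagonal_mat (mat_adjoint U * A * U)"
    using assms
  proof (induction n arbitrary: A)
    case 0
    then show ?case
      by (intro exI[of _ "1\<^sub>m 0"]) (simp add: unitary_def diagonal_mat_def)
  next
    case (Suc k)
    obtain W e where W: "unitary (Suc k) W" "mat_adjoint W = W"
      and col: "\<forall>i<Suc k. (W * A * W) $$ (i,0) = (if i = 0 then e else 0)"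
      using hermitian_deflation[OF Suc.prems(1)] by blast
    have Wc: "W \<in> carrier_mat (Suc k) (Suc k)"
      using W unfolding unitary_def by simp
    define A' where "A' = W * A * W"
    have A': "A' \<in> carrier_mat (Suc k) (Suc k)" "mat_adjoint A' = A'"
      using mat_adjoint_conj_hermitian[OF Wc Suc.prems] Wc Suc.prems W(2) unfolding A'_def by auto
    have "mat_adjoint (mat k k (\<lambda>(i,j). A' $$ (Suc i, Suc j))) = mat k k (\<lambda>(i,j). A' $$ (Suc i, Suc j))"
    proof (rule eq_matI)
      fix i j assume "i < dim_row (mat k k (\<lambda>(i,j). A' $$ (Suc i, Suc j)))"
        "j < dim_col (mat k k (\<lambda>(i,j). A' $$ (Suc i, Suc j)))"
      then show "mat_adjoint (mat k k (\<lambda>(i,j). A' $$ (Suc i, Suc j))) $$ (i,j) = mat k k (\<lambda>(i,j). A' $$ (Suc i, Suc j)) $$ (i,j)"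
        using arg_cong[OF A'(2), of "\<lambda>M. M $$ (Suc i, Suc j)"] A'(1) by simp
    qed simp_all
    then obtain U where U: "unitary k U" and D: "diagonal_mat (mat_adjoint U * mat k k (\<lambda>(i,j). A' $$ (Suc i, Suc j)) * U)"
      using Suc.IH[of "mat k k (\<lambda>(i,j). A' $$ (Suc i, Suc j))"] by auto
    define V where "V = block_diag_one k U"
    have V: "unitary (Suc k) V" "diagonal_mat (mat_adjoint V * A' * V)"
      unfolding V_def using unitary_block_diag_one[OF U] diagonal_mat_conj_block_diag_one[OF A' _ U D] col
      unfolding A'_def by auto
    have Vc: "V \<in> carrier_mat (Suc k) (Suc k)"
      using V unfolding unitary_def by simp
    have "mat_adjoint (W * V) * A * (W * V) = mat_adjoint V * A' * V"
      using Wc Vc Suc.prems(1) W(2) unfolding A'_def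
      by (simp add: mat_adjoint_mult[OF Wc Vc] assoc_mult_mat[of _ "Suc k" "Suc k" _ "Suc k" _ "Suc k"])
    then show ?case
      using unitary_mult[OF W(1) V(1)] V(2) by auto
  qed
  then show ?thesis
    using that by blast
qed

section \<open>Trace norm of Hermitian matrices\<close>

lemma hermitian_spectral_decomposition:
  assumes A: "A \<in> carrier_mat n n" "mat_adjoint A = A"
  obtains U and r :: "nat \<Rightarrow> real" where "unitary n U"
    "mat_adjoint U * A * U = mat_diag n (\<lambda>i. complex_of_real (r i))"
    "A = U * mat_diag n (\<lambda>i. complex_of_real (r i)) * mat_adjoint U"
proof -
  obtain U where U: "unitary n U" and D: "diagonal_mat (mat_adjoint U * A * U)"
    using hermitian_unitarily_diagonalizable[OF A] by blast
  have Uc: "U \<in> carrier_mat n n" and UU: "mat_adjoint U * U = 1\<^sub>m n" and UU': "U * mat_adjoint U = 1\<^sub>m n"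
    using U unitary_mult_adjoint[OF U] unfolding unitary_def by auto
  define r where "r i = Re ((mat_adjoint U * A * U) $$ (i,i))" for i
  have "mat_adjoint (mat_adjoint U * A * U) = mat_adjoint U * A * U"
    using mat_adjoint_conj_hermitian[OF mat_adjoint_carrier[OF Uc] A] by simp
  then have "cnj ((mat_adjoint U * A * U) $$ (i,i)) = (mat_adjoint U * A * U) $$ (i,i)" if "i < n" for i
    using arg_cong[of _ _ "\<lambda>M. M $$ (i,i)"] Uc A that by (metis carrier_matD index_mat_adjoint index_mult_mat(2,3) mat_adjoint_carrier)
  then have "(mat_adjoint U * A * U) $$ (i,i) = complex_of_real (r i)" if "i < n" for i
    using that unfolding r_def by (metis Reals_cnj_iff complex_is_Real_iff of_real_Re)
  then have diag: "mat_adjoint U * A * U = mat_diag n (\<lambda>i. complex_of_real (r i))"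
    using D Uc A unfolding diagonal_mat_def mat_diag_def by (auto intro!: eq_matI)
  have "U * mat_diag n (\<lambda>i. complex_of_real (r i)) * mat_adjoint U = (U * mat_adjoint U) * A * (U * mat_adjoint U)"
    using Uc A unfolding diag[symmetric]
    by (simp add: assoc_mult_mat[of _ n n _ n _ n] mult_carrier_mat[of _ n n _ n])
  then show ?thesis
    using that[OF U diag] UU' A by simp
qed

lemma index_mult_diag_mult_adjoint:
  assumes "U \<in> carrier_mat n n" "j < n" "k < n"
  shows "(U * mat_diag n d * mat_adjoint U) $$ (j,k) = (\<Sum>i<n. U $$ (j,i) * d i * cnj (U $$ (k,i)))"
proof -
  have "(U * mat_diag n d * mat_adjoint U) $$ (j,k)
      = (\<Sum>l<n. \<Sum>m<n. U $$ (j,l) * mat_diag n d $$ (l,m) * mat_adjoint U $$ (m,k))"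
    by (rule index_mult3_mat_sum[OF assms(1) mat_diag_dim mat_adjoint_carrier[OF assms(1)] assms(2,3)])
  also have "\<dots> = (\<Sum>l<n. \<Sum>m<n. if l = m then U $$ (j,l) * d l * cnj (U $$ (k,l)) else 0)"
    using assms by (intro sum.cong refl) (simp add: mat_diag_def)
  finally show ?thesis
    by simp
qed

lemma mtrace_mult_diag_mult_adjoint:
  assumes "unitary n U"
  shows "mtrace (U * mat_diag n d * mat_adjoint U) = (\<Sum>i<n. d i)"
proof -
  have U: "U \<in> carrier_mat n n"
    using assms unfolding unitary_def by simp
  have "mtrace (U * mat_diag n d * mat_adjoint U) = (\<Sum>j<n. (U * mat_diag n d * mat_adjoint U) $$ (j,j))"
    using U by (simp add: mtrace_def)
  also have "\<dots> = (\<Sum>j<n. \<Sum>i<n. U $$ (j,i) * d i * cnj (U $$ (j,i)))"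
    using U by (intro sum.cong refl) (simp add: index_mult_diag_mult_adjoint del: index_mult_mat)
  also have "\<dots> = (\<Sum>i<n. d i * (\<Sum>j<n. U $$ (j,i) * cnj (U $$ (j,i))))"
    by (subst sum.swap) (simp add: sum_distrib_left ac_simps)
  finally show ?thesis
    using unitary_col_norm[OF assms] by simp
qed

lemma sum_roots_order_linear_factors:
  fixes g :: "complex \<Rightarrow> real"
  shows "(\<Sum>z\<in>{x. poly (\<Prod>a\<leftarrow>xs. [:- a, 1:]) x = 0}. real (Polynomial.order z (\<Prod>a\<leftarrow>xs. [:- a, 1:])) * g z)
     = sum_list (map g xs)"
proof (induction xs)
  case Nil then show ?case by simp
next
  case (Cons a xs)
  let ?q = "(\<Prod>a\<leftarrow>xs. [:- a, 1:])"
  let ?p = "[:- a, 1:] * ?q"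
  have q0: "?q \<noteq> 0" by (auto simp: prod_list_zero_iff)
  have l0: "[:- a, 1:] \<noteq> (0::complex poly)" by simp
  have p0: "?p \<noteq> 0" using l0 q0 by (simp only: mult_eq_0_iff) blast
  let ?Rq = "{x. poly ?q x = 0}" and ?Rp = "{x. poly ?p x = 0}"
  have fin: "finite ?Rp" using poly_roots_finite[OF p0] .
  have sub: "?Rq \<subseteq> ?Rp" by auto
  have ain: "a \<in> ?Rp" by simp
  have ord: "Polynomial.order z ?p = (if z = a then 1 else 0) + Polynomial.order z ?q" for z
  proof -
    have "Polynomial.order z ?p = Polynomial.order z [:- a, 1:] + Polynomial.order z ?q" using order_mult[OF p0] .
    moreover have "Polynomial.order z [:- a, 1:] = (if z = a then 1 else 0)"
    proof (cases "z = a")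
      case True then show ?thesis using order_power_n_n[of a 1] by simp
    next
      case False
      have "Polynomial.order z [:- a, 1:] = 0" by (rule order_0I) (use False in simp)
      then show ?thesis using False by simp
    qed
    ultimately show ?thesis by simp
  qed
  have "(\<Sum>z\<in>?Rp. real (Polynomial.order z ?p) * g z) = (\<Sum>z\<in>?Rp. (if z = a then g z else 0) + real (Polynomial.order z ?q) * g z)"
    unfolding ord by (intro sum.cong refl) (simp add: algebra_simps)
  also have "\<dots> = g a + (\<Sum>z\<in>?Rp. real (Polynomial.order z ?q) * g z)"
    using fin ain by (simp add: sum.distrib)
  also have "(\<Sum>z\<in>?Rp. real (Polynomial.order z ?q) * g z) = (\<Sum>z\<in>?Rq. real (Polynomial.order z ?q) * g z)"
  proof (rule sum.mono_neutral_right[OF fin sub])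
    show "\<forall>z\<in>?Rp - ?Rq. real (Polynomial.order z ?q) * g z = 0" by (auto simp: order_0I)
  qed
  finally show ?case using Cons.IH by simp
qed


lemma trace_norm_mult_diag_mult_adjoint:
  assumes U: "unitary n U"
  shows "trace_norm (U * mat_diag n (\<lambda>i. complex_of_real (r i)) * mat_adjoint U) = (\<Sum>i<n. \<bar>r i\<bar>)"
proof -
  define D where "D = mat_diag n (\<lambda>i. complex_of_real (r i))"
  define A where "A = U * D * mat_adjoint U"
  have Uc: "U \<in> carrier_mat n n" and UU: "mat_adjoint U * U = 1\<^sub>m n" and UU': "U * mat_adjoint U = 1\<^sub>m n"
    using U unitary_mult_adjoint[OF U] unfolding unitary_def by auto
  have D: "D \<in> carrier_mat n n" "mat_adjoint D = D"
    unfolding D_def by (auto simp: mat_diag_def intro!: eq_matI)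
  have "mat_adjoint A = A"
    unfolding A_def by (rule mat_adjoint_conj_hermitian[OF Uc D])
  moreover have "mat_adjoint U * (U * X) = X" if "X \<in> carrier_mat n n" for X
    using that Uc UU by (simp add: assoc_mult_mat[symmetric, of _ n n _ n _ n])
  ultimately have "mat_adjoint A * A = U * (D * D) * mat_adjoint U"
    using Uc D unfolding A_def
    by (simp add: assoc_mult_mat[of _ n n _ n _ n] mult_carrier_mat[of _ n n _ n])
  then have sim: "similar_mat (mat_adjoint A * A) (D * D)"
    using Uc D UU UU' by (intro similar_matI[where P=U and Q="mat_adjoint U" and n=n]) auto
  have DD: "D * D = mat_diag n (\<lambda>i. complex_of_real (r i * r i))"
    unfolding D_def by simp
  then have "char_poly (D * D) = (\<Prod>a\<leftarrow>diag_mat (D * D). [:- a, 1:])"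
    by (intro char_poly_upper_triangular[of _ n]) (simp_all add: upper_triangular_def mat_diag_def)
  then have "char_poly (mat_adjoint A * A) = (\<Prod>a\<leftarrow>diag_mat (D * D). [:- a, 1:])"
    by (simp only: char_poly_similar[OF sim])
  then have "trace_norm A = sum_list (map (\<lambda>z. sqrt (Re z)) (diag_mat (D * D)))"
    unfolding trace_norm_def Let_def by (simp add: sum_roots_order_linear_factors)
  also have "\<dots> = (\<Sum>i<n. sqrt (r i * r i))"
    unfolding DD by (simp add: diag_mat_def mat_diag_def sum_list_sum_nth lessThan_atLeast0 flip: of_real_mult)
  finally show ?thesis
    unfolding A_def D_def by (simp add: real_sqrt_mult_self)
qed

lemma trace_minus_two_diag_le_trace_norm:
  assumes A: "A \<in> carrier_mat n n" "mat_adjoint A = A" and y: "y < n"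
  shows "Re (mtrace A) - 2 * Re (A $$ (y,y)) \<le> trace_norm A"
proof -
  obtain U and r :: "nat \<Rightarrow> real" where U: "unitary n U"
    and A_eq: "A = U * mat_diag n (\<lambda>i. complex_of_real (r i)) * mat_adjoint U"
    using hermitian_spectral_decomposition[OF A] by blast
  have Uc: "U \<in> carrier_mat n n"
    using U unfolding unitary_def by simp
  define p where "p i = (cmod (U $$ (y,i)))\<^sup>2" for i
  have "complex_of_real (\<Sum>i<n. p i) = (\<Sum>i<n. U $$ (y,i) * cnj (U $$ (y,i)))"
    unfolding p_def of_real_sum by (intro sum.cong refl) (rule complex_norm_square)
  then have p_sum: "(\<Sum>i<n. p i) = 1"
    using unitary_row_norm[OF U y] by (simp only: of_real_eq_1_iff)
  have "A $$ (y,y) = (\<Sum>i<n. U $$ (y,i) * complex_of_real (r i) * cnj (U $$ (y,i)))"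
    unfolding A_eq by (rule index_mult_diag_mult_adjoint[OF Uc y y])
  also have "\<dots> = (\<Sum>i<n. complex_of_real (p i * r i))"
    unfolding p_def by (intro sum.cong refl) (simp add: mult.commute mult.left_commute flip: complex_norm_square)
  finally have A_yy: "Re (A $$ (y,y)) = (\<Sum>i<n. p i * r i)"
    by (simp add: Re_sum)
  have "Re (mtrace A) - 2 * Re (A $$ (y,y)) = (\<Sum>i<n. (1 - 2 * p i) * r i)"
    unfolding A_yy unfolding A_eq mtrace_mult_diag_mult_adjoint[OF U]
    by (simp add: Re_sum algebra_simps sum_subtractf sum_distrib_left)
  also have "\<dots> \<le> (\<Sum>i<n. \<bar>r i\<bar>)"
  proof (intro sum_mono)
    fix i assume "i \<in> {..<n}"
    then have "p i \<le> (\<Sum>i<n. p i)"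
      by (intro member_le_sum) (auto simp: p_def)
    moreover have "0 \<le> p i"
      by (simp add: p_def)
    ultimately have "\<bar>1 - 2 * p i\<bar> \<le> 1"
      using p_sum by linarith
    then have "\<bar>(1 - 2 * p i) * r i\<bar> \<le> \<bar>r i\<bar>"
      by (simp add: abs_mult mult_left_le_one_le)
    then show "(1 - 2 * p i) * r i \<le> \<bar>r i\<bar>"
      by linarith
  qed
  finally show ?thesis
    unfolding A_eq trace_norm_mult_diag_mult_adjoint[OF U] .
qed

lemma norm_mult3_le:
  fixes a b x :: complex
  assumes "cmod a \<le> 1" "cmod b \<le> 1"
  shows "cmod (a * x * b) \<le> cmod x"
proof -
  have "cmod a * cmod x * cmod b \<le> 1 * cmod x * 1"
    using assms by (intro mult_mono) auto
  then show ?thesis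
    by (simp add: norm_mult)
qed

lemma eigenvalue_eq_quadratic_form:
  assumes U: "unitary n U" and D: "mat_adjoint U * A * U = mat_diag n d"
    and A: "A \<in> carrier_mat n n" and i: "i < n"
  shows "d i = (\<Sum>l<n. \<Sum>m<n. cnj (U $$ (l,i)) * A $$ (l,m) * U $$ (m,i))"
proof -
  have Uc: "U \<in> carrier_mat n n"
    using U unfolding unitary_def by simp
  have "d i = (mat_adjoint U * A * U) $$ (i,i)"
    unfolding D using i by (simp add: mat_diag_def)
  also have "\<dots> = (\<Sum>l<n. \<Sum>m<n. cnj (U $$ (l,i)) * A $$ (l,m) * U $$ (m,i))"
    using Uc i by (simp add: index_mult3_mat_sum[OF mat_adjoint_carrier[OF Uc] A Uc i i])
  finally show ?thesis .
qed

lemma trace_norm_le_entry_bound: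
  assumes A: "A \<in> carrier_mat n n" "mat_adjoint A = A"
    and bound: "\<forall>i<n. \<forall>j<n. cmod (A $$ (i,j)) \<le> c"
  shows "trace_norm A \<le> real n ^ 3 * c"
proof -
  obtain U and r :: "nat \<Rightarrow> real" where U: "unitary n U"
    and D: "mat_adjoint U * A * U = mat_diag n (\<lambda>i. complex_of_real (r i))"
    and A_eq: "A = U * mat_diag n (\<lambda>i. complex_of_real (r i)) * mat_adjoint U"
    using hermitian_spectral_decomposition[OF A] by blast
  have "\<bar>r i\<bar> \<le> real n ^ 2 * c" if i: "i < n" for i
  proof -
    have "\<bar>r i\<bar> = cmod (\<Sum>l<n. \<Sum>m<n. cnj (U $$ (l,i)) * A $$ (l,m) * U $$ (m,i))"
      using arg_cong[OF eigenvalue_eq_quadratic_form[OF U D A(1) i], of cmod] by simp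
    also have "\<dots> \<le> (\<Sum>l<n. \<Sum>m<n. cmod (cnj (U $$ (l,i)) * A $$ (l,m) * U $$ (m,i)))"
      by (rule order.trans[OF norm_sum sum_mono[OF norm_sum]])
    also have "\<dots> \<le> (\<Sum>l<n. \<Sum>m<n. c)"
    proof (intro sum_mono)
      fix l m assume "l \<in> {..<n}" "m \<in> {..<n}"
      then have "cmod (cnj (U $$ (l,i)) * A $$ (l,m) * U $$ (m,i)) \<le> cmod (A $$ (l,m))"
        using unitary_index_le_1[OF U] i by (intro norm_mult3_le) auto
      then show "cmod (cnj (U $$ (l,i)) * A $$ (l,m) * U $$ (m,i)) \<le> c"
        using bound \<open>l \<in> {..<n}\<close> \<open>m \<in> {..<n}\<close> by force
    qed
    finally show ?thesis
      by (simp add: power2_eq_square)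
  qed
  then have "(\<Sum>i<n. \<bar>r i\<bar>) \<le> (\<Sum>i<n. real n ^ 2 * c)"
    by (intro sum_mono) simp
  then show ?thesis
    unfolding A_eq trace_norm_mult_diag_mult_adjoint[OF U] by (simp add: power3_eq_cube power2_eq_square)
qed

lemma density_index_le_1:
  assumes \<rho>: "density n \<rho>" and j: "j < n" and k: "k < n"
  shows "cmod (\<rho> $$ (j,k)) \<le> 1"
proof -
  have psd: "psd n \<rho>" and tr: "mtrace \<rho> = 1"
    using \<rho> unfolding density_def by auto
  then have \<rho>c: "\<rho> \<in> carrier_mat n n" and "mat_adjoint \<rho> = \<rho>"
    unfolding psd_def by auto
  then obtain U and r :: "nat \<Rightarrow> real" where U: "unitary n U"
    and D: "mat_adjoint U * \<rho> * U = mat_diag n (\<lambda>i. complex_of_real (r i))"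
    and \<rho>_eq: "\<rho> = U * mat_diag n (\<lambda>i. complex_of_real (r i)) * mat_adjoint U"
    using hermitian_spectral_decomposition by blast
  have Uc: "U \<in> carrier_mat n n"
    using U unfolding unitary_def by simp
  have r_nonneg: "0 \<le> r i" if i: "i < n" for i
  proof -
    define v where "v = vec n (\<lambda>l. U $$ (l,i))"
    have "complex_of_real (r i) = (\<Sum>l<n. \<Sum>m<n. cnj (v $ l) * \<rho> $$ (l,m) * v $ m)"
      unfolding eigenvalue_eq_quadratic_form[OF U D \<rho>c i] v_def by (intro sum.cong refl) simp
    moreover have "v \<in> carrier_vec n"
      unfolding v_def by simp
    ultimately have "0 \<le> Re (complex_of_real (r i))"
      using psd unfolding psd_def by simp
    then show ?thesis
      by simp
  qed
  have "complex_of_real (\<Sum>i<n. r i) = 1"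
    using tr unfolding \<rho>_eq mtrace_mult_diag_mult_adjoint[OF U] by simp
  then have r_sum: "(\<Sum>i<n. r i) = 1"
    by (simp only: of_real_eq_1_iff)
  have "cmod (\<rho> $$ (j,k)) \<le> (\<Sum>i<n. cmod (U $$ (j,i) * complex_of_real (r i) * cnj (U $$ (k,i))))"
    unfolding \<rho>_eq using Uc j k by (simp add: index_mult_diag_mult_adjoint norm_sum del: index_mult_mat)
  also have "\<dots> \<le> (\<Sum>i<n. r i)"
  proof (intro sum_mono)
    fix i assume "i \<in> {..<n}"
    then have "cmod (U $$ (j,i) * complex_of_real (r i) * cnj (U $$ (k,i))) \<le> cmod (complex_of_real (r i))"
      using unitary_index_le_1[OF U] j k by (intro norm_mult3_le) auto
    then show "cmod (U $$ (j,i) * complex_of_real (r i) * cnj (U $$ (k,i))) \<le> r i"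
      using r_nonneg \<open>i \<in> {..<n}\<close> by simp
  qed
  finally show ?thesis
    using r_sum by simp
qed

section \<open>Distance of a dephasing-covariant channel from the Hadamard transform\<close>

definition column_projector :: "complex mat \<Rightarrow> nat \<Rightarrow> complex mat" where
  "column_projector U y = mat (dim_row U) (dim_row U) (\<lambda>(i,j). U $$ (i,y) * cnj (U $$ (j,y)))"

definition basis_projector :: "nat \<Rightarrow> nat \<Rightarrow> complex mat" where
  "basis_projector n y = mat n n (\<lambda>(i,j). if i = y \<and> j = y then 1 else 0)"

definition bounded_hermitian :: "nat \<Rightarrow> complex mat \<Rightarrow> bool" where
  "bounded_hermitian n X \<longleftrightarrow>
     X \<in> carrier_mat n n \<and> mat_adjoint X = X \<and> (\<forall>i<n. \<forall>j<n. cmod (X $$ (i,j)) \<le> 1)"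

lemma density_column_projector:
  assumes U: "unitary n U" and y: "y < n"
  shows "density n (column_projector U y)"
proof -
  have dim: "dim_row U = n"
    using U unfolding unitary_def carrier_mat_def by simp
  let ?P = "column_projector U y"
  have "0 \<le> Re (\<Sum>i<n. \<Sum>j<n. cnj (v $ i) * ?P $$ (i,j) * v $ j)" for v
  proof -
    define a where "a = (\<Sum>i<n. cnj (v $ i) * U $$ (i,y))"
    have "(\<Sum>i<n. \<Sum>j<n. cnj (v $ i) * ?P $$ (i,j) * v $ j)
        = (\<Sum>i<n. \<Sum>j<n. (cnj (v $ i) * U $$ (i,y)) * (cnj (U $$ (j,y)) * v $ j))"
      by (intro sum.cong refl) (simp add: column_projector_def dim ac_simps)
    also have "\<dots> = a * cnj a"
      unfolding a_def sum_product[symmetric] by (simp add: cnj_sum mult.commute)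
    finally show ?thesis
      by (simp flip: complex_norm_square)
  qed
  moreover have "mat_adjoint ?P = ?P"
    by (rule eq_matI) (auto simp: column_projector_def)
  moreover have "mtrace ?P = 1"
    using unitary_col_norm[OF U y] by (simp add: mtrace_def column_projector_def dim)
  ultimately show ?thesis
    unfolding density_def psd_def by (simp add: column_projector_def dim)
qed

lemma mat_adjoint_conj_column_projector:
  assumes U: "unitary n U" and y: "y < n"
  shows "mat_adjoint U * column_projector U y * U = basis_projector n y"
proof -
  have Uc: "U \<in> carrier_mat n n" and UU: "mat_adjoint U * U = 1\<^sub>m n"
    using U unfolding unitary_def by auto
  have P: "column_projector U y \<in> carrier_mat n n"
    using carrier_matD[OF Uc] unfolding column_projector_def by simp
  have "(mat_adjoint U * column_projector U y * U) $$ (i,j) = basis_projector n y $$ (i,j)"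
    if i: "i < n" and j: "j < n" for i j
  proof -
    have "(mat_adjoint U * column_projector U y * U) $$ (i,j)
        = (\<Sum>l<n. \<Sum>m<n. mat_adjoint U $$ (i,l) * column_projector U y $$ (l,m) * U $$ (m,j))"
      by (rule index_mult3_mat_sum[OF mat_adjoint_carrier[OF Uc] P Uc i j])
    also have "\<dots> = (\<Sum>l<n. \<Sum>m<n. (mat_adjoint U $$ (i,l) * U $$ (l,y)) * (mat_adjoint U $$ (y,m) * U $$ (m,j)))"
      using carrier_matD[OF Uc] i y by (intro sum.cong refl) (simp add: column_projector_def mult.assoc)
    also have "\<dots> = (mat_adjoint U * U) $$ (i,y) * (mat_adjoint U * U) $$ (y,j)"
      unfolding index_mult_mat_sum[OF mat_adjoint_carrier[OF Uc] Uc i y]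
        index_mult_mat_sum[OF mat_adjoint_carrier[OF Uc] Uc y j] sum_product ..
    finally show ?thesis
      using UU i j y by (simp add: basis_projector_def)
  qed
  then show ?thesis
    using Uc P by (intro eq_matI) (auto simp: basis_projector_def)
qed

lemma dephase_column_projector:
  assumes "U \<in> carrier_mat n n" "\<forall>i<n. U $$ (i,y) * cnj (U $$ (i,y)) = c"
  shows "dephase n (column_projector U y) = c \<cdot>\<^sub>m 1\<^sub>m n"
  using assms by (intro eq_matI) (auto simp: dephase_def column_projector_def)

lemma bounded_hermitian_density: "density n \<rho> \<Longrightarrow> bounded_hermitian n \<rho>"
  using density_index_le_1 unfolding bounded_hermitian_def density_def psd_def by blast

lemma bounded_hermitian_kron:
  assumes A: "bounded_hermitian a A" and B: "bounded_hermitian b B"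
  shows "bounded_hermitian (a * b) (kron A B)"
  unfolding bounded_hermitian_def
proof (intro conjI allI impI)
  have Ac: "A \<in> carrier_mat a a" and Bc: "B \<in> carrier_mat b b"
    using A B unfolding bounded_hermitian_def by auto
  then show "kron A B \<in> carrier_mat (a * b) (a * b)"
    by (rule kron_carrier)
  show "mat_adjoint (kron A B) = kron A B"
    using A B unfolding bounded_hermitian_def by (simp add: mat_adjoint_kron)
  fix i j assume i: "i < a * b" and j: "j < a * b"
  have "cmod (kron A B $$ (i,j)) = cmod (A $$ (i div b, j div b)) * cmod (B $$ (i mod b, j mod b))"
    using Ac Bc i j by (simp add: norm_mult)
  also have "\<dots> \<le> 1 * 1"
    using A B less_mult_div_mod[OF i] less_mult_div_mod[OF j] unfolding bounded_hermitian_def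
    by (intro mult_mono) auto
  finally show "cmod (kron A B $$ (i,j)) \<le> 1"
    by simp
qed

lemma channel_kron_density:
  assumes E: "channel (n * m) n E" and \<rho>: "density n \<rho>" and \<tau>: "density m \<tau>"
  shows "E (kron \<rho> \<tau>) \<in> carrier_mat n n" "mat_adjoint (E (kron \<rho> \<tau>)) = E (kron \<rho> \<tau>)"
    "mtrace (E (kron \<rho> \<tau>)) = 1"
proof -
  have X: "kron \<rho> \<tau> \<in> carrier_mat (n * m) (n * m)" "mat_adjoint (kron \<rho> \<tau>) = kron \<rho> \<tau>"
    using bounded_hermitian_kron[OF bounded_hermitian_density[OF \<rho>] bounded_hermitian_density[OF \<tau>]]
    unfolding bounded_hermitian_def by auto
  show "E (kron \<rho> \<tau>) \<in> carrier_mat n n" "mat_adjoint (E (kron \<rho> \<tau>)) = E (kron \<rho> \<tau>)"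
    using channel_carrier[OF E X(1)] channel_adjoint[OF E X] .
  have "\<rho> \<in> carrier_mat n n" "\<tau> \<in> carrier_mat m m"
    using \<rho> \<tau> unfolding density_def psd_def by auto
  then show "mtrace (E (kron \<rho> \<tau>)) = 1"
    using channel_mtrace[OF E X(1)] mtrace_kron \<rho> \<tau> unfolding density_def by simp
qed

text \<open>Channels map bounded Hermitian inputs to uniformly bounded Hermitian outputs, which makes the
  supremum in \<open>chan_dist\<close> finite.\<close>

lemma half_trace_norm_le_chan_dist:
  assumes E: "channel d1 n E" and V: "channel d2 n V"
    and F: "\<And>\<sigma>. density d \<sigma> \<Longrightarrow> bounded_hermitian d1 (F \<sigma>)"
    and G: "\<And>\<sigma>. density d \<sigma> \<Longrightarrow> bounded_hermitian d2 (G \<sigma>)"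
    and \<rho>: "density d \<rho>"
  shows "trace_norm (E (F \<rho>) - V (G \<rho>)) / 2 \<le> chan_dist d (\<lambda>\<rho>. E (F \<rho>)) (\<lambda>\<rho>. V (G \<rho>))"
proof -
  obtain c1 where c1: "\<And>X i j. X \<in> carrier_mat d1 d1 \<Longrightarrow> \<forall>l<d1. \<forall>m<d1. cmod (X $$ (l,m)) \<le> 1 \<Longrightarrow>
      i < n \<Longrightarrow> j < n \<Longrightarrow> cmod (E X $$ (i,j)) \<le> c1"
    using channel_index_bound[OF E] by blast
  obtain c2 where c2: "\<And>X i j. X \<in> carrier_mat d2 d2 \<Longrightarrow> \<forall>l<d2. \<forall>m<d2. cmod (X $$ (l,m)) \<le> 1 \<Longrightarrow>
      i < n \<Longrightarrow> j < n \<Longrightarrow> cmod (V X $$ (i,j)) \<le> c2"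
    using channel_index_bound[OF V] by blast
  have "trace_norm (E (F \<sigma>) - V (G \<sigma>)) / 2 \<le> real n ^ 3 * (c1 + c2) / 2" if \<sigma>: "density d \<sigma>" for \<sigma>
  proof -
    have Fc: "F \<sigma> \<in> carrier_mat d1 d1" "mat_adjoint (F \<sigma>) = F \<sigma>"
      and Gc: "G \<sigma> \<in> carrier_mat d2 d2" "mat_adjoint (G \<sigma>) = G \<sigma>"
      using F[OF \<sigma>] G[OF \<sigma>] unfolding bounded_hermitian_def by auto
    have EF: "E (F \<sigma>) \<in> carrier_mat n n" and VG: "V (G \<sigma>) \<in> carrier_mat n n"
      using channel_carrier[OF E Fc(1)] channel_carrier[OF V Gc(1)] .
    have "mat_adjoint (E (F \<sigma>) - V (G \<sigma>)) = E (F \<sigma>) - V (G \<sigma>)"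
      using channel_adjoint[OF E Fc] channel_adjoint[OF V Gc] by (simp add: mat_adjoint_minus[OF EF VG])
    moreover have "\<forall>i<n. \<forall>j<n. cmod ((E (F \<sigma>) - V (G \<sigma>)) $$ (i,j)) \<le> c1 + c2"
    proof (intro allI impI)
      fix i j assume ij: "i < n" "j < n"
      have "(E (F \<sigma>) - V (G \<sigma>)) $$ (i,j) = E (F \<sigma>) $$ (i,j) - V (G \<sigma>) $$ (i,j)"
        using ij carrier_matD[OF VG] by simp
      then have "cmod ((E (F \<sigma>) - V (G \<sigma>)) $$ (i,j)) \<le> cmod (E (F \<sigma>) $$ (i,j)) + cmod (V (G \<sigma>) $$ (i,j))"
        by (simp add: norm_triangle_ineq4)
      also have "\<dots> \<le> c1 + c2"
        using c1[OF Fc(1) _ ij] c2[OF Gc(1) _ ij] F[OF \<sigma>] G[OF \<sigma>] unfolding bounded_hermitian_def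
        by (intro add_mono) auto
      finally show "cmod ((E (F \<sigma>) - V (G \<sigma>)) $$ (i,j)) \<le> c1 + c2" .
    qed
    ultimately show ?thesis
      using trace_norm_le_entry_bound[OF minus_carrier_mat[OF VG]] by simp
  qed
  then have "bdd_above {trace_norm (E (F \<sigma>) - V (G \<sigma>)) / 2 | \<sigma>. density d \<sigma>}"
    by (intro bdd_aboveI[of _ "real n ^ 3 * (c1 + c2) / 2"]) auto
  moreover have "trace_norm (E (F \<rho>) - V (G \<rho>)) / 2 \<in> {trace_norm (E (F \<sigma>) - V (G \<sigma>)) / 2 | \<sigma>. density d \<sigma>}"
    using \<rho> by blast
  ultimately show ?thesis
    unfolding chan_dist_def by (rule cSup_upper[rotated])
qed

text \<open>The diagonal of an output only depends on the dephased input, which is the same for all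
  \<open>\<rho> y\<close>; as this common diagonal sums to one, some entry is at most its average.\<close>

lemma dephasing_covariant_small_diagonal:
  assumes E: "channel (n * m) n E"
    and commute: "\<forall>X \<in> carrier_mat (n * m) (n * m). E (dephase (n * m) X) = dephase n (E X)"
    and \<tau>: "density m \<tau>" and n: "0 < n"
    and \<rho>: "\<And>y. y < n \<Longrightarrow> density n (\<rho> y)" and D: "\<And>y. y < n \<Longrightarrow> dephase n (\<rho> y) = D"
  obtains y where "y < n" "Re (E (kron (\<rho> y) \<tau>) $$ (y,y)) \<le> 1 / n"
proof -
  have \<tau>c: "\<tau> \<in> carrier_mat m m" and \<rho>c: "\<And>y. y < n \<Longrightarrow> \<rho> y \<in> carrier_mat n n"
    using \<tau> \<rho> unfolding density_def psd_def by auto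
  define Q where "Q = E (kron D (dephase m \<tau>))"
  have X: "kron (\<rho> y) \<tau> \<in> carrier_mat (n * m) (n * m)" if "y < n" for y
    using kron_carrier[OF \<rho>c[OF that] \<tau>c] .
  have diag: "E (kron (\<rho> y) \<tau>) $$ (i,i) = Q $$ (i,i)" if y: "y < n" and i: "i < n" for y i
  proof -
    have "Q = E (dephase (n * m) (kron (\<rho> y) \<tau>))"
      unfolding Q_def dephase_kron[OF \<rho>c[OF y] \<tau>c] D[OF y] ..
    also have "\<dots> = dephase n (E (kron (\<rho> y) \<tau>))"
      using commute X[OF y] by blast
    finally show ?thesis
      using i by (simp add: dephase_def)
  qed
  have "mtrace (E (kron (\<rho> 0) \<tau>)) = 1"
    by (rule channel_kron_density(3)[OF E \<rho>[OF n] \<tau>])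
  then have "(\<Sum>i<n. Re (Q $$ (i,i))) = 1"
    using channel_carrier[OF E X[OF n]] diag[OF n] by (simp add: mtrace_def flip: Re_sum)
  then have "\<exists>y<n. Re (Q $$ (y,y)) \<le> 1 / n"
  proof (rule contrapos_pp)
    assume "\<not> (\<exists>y<n. Re (Q $$ (y,y)) \<le> 1 / n)"
    then have "(\<Sum>i<n. 1 / real n) < (\<Sum>i<n. Re (Q $$ (i,i)))"
      using n by (intro sum_strict_mono) auto
    then show "(\<Sum>i<n. Re (Q $$ (i,i))) \<noteq> 1"
      using n by simp
  qed
  then show ?thesis
    using that diag by auto
qed

lemma trace_norm_minus_basis_projector_ge:
  assumes A: "A \<in> carrier_mat n n" "mat_adjoint A = A" "mtrace A = 1" and y: "y < n"
  shows "2 - 2 * Re (A $$ (y,y)) \<le> trace_norm (A - basis_projector n y)"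
proof -
  have P: "basis_projector n y \<in> carrier_mat n n" "mat_adjoint (basis_projector n y) = basis_projector n y"
    by (auto simp: basis_projector_def intro!: eq_matI)
  have "mat_adjoint (A - basis_projector n y) = A - basis_projector n y"
    using A P by (simp add: mat_adjoint_minus[OF A(1) P(1)])
  moreover have "mtrace (A - basis_projector n y) = 0"
    using A y by (simp add: mtrace_def basis_projector_def sum_subtractf)
  moreover have "(A - basis_projector n y) $$ (y,y) = A $$ (y,y) - 1"
    using A y by (simp add: basis_projector_def)
  ultimately show ?thesis
    using trace_minus_two_diag_le_trace_norm[OF minus_carrier_mat[OF P(1), of A] _ y] by simp
qed

theorem lemma8:
  fixes n m :: nat and E :: "complex mat \<Rightarrow> complex mat" and \<tau> :: "complex mat"
  assumes chan: "channel (2^n * m) (2^n) E"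
    and commute: "\<forall>X \<in> carrier_mat (2^n * m) (2^n * m). E (dephase (2^n * m) X) = dephase (2^n) (E X)"
    and tau: "density m \<tau>"
  shows "chan_dist (2^n) (\<lambda>\<rho>. E (kron \<rho> \<tau>)) (\<lambda>\<rho>. hadamard_pow n * \<rho> * hadamard_pow n)
           \<ge> 1 - 1 / 2^n"
proof -
  let ?N = "2^n :: nat" and ?H = "hadamard_pow n"
  let ?\<rho> = "column_projector ?H"
  note H = unitary_hadamard_pow[of n]
  have states: "density ?N (?\<rho> y)" if "y < ?N" for y
    using density_column_projector[OF H that] .
  have "dephase ?N (?\<rho> y) = (1 / 2^n) \<cdot>\<^sub>m 1\<^sub>m ?N" if "y < ?N" for y
    using dephase_column_projector[OF hadamard_pow_carrier] hadamard_pow_index_norm that by simp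
  then obtain y where y: "y < ?N" and small: "Re (E (kron (?\<rho> y) \<tau>) $$ (y,y)) \<le> 1 / 2^n"
    using dephasing_covariant_small_diagonal[OF chan commute tau _ states] by force
  have "?H * ?\<rho> y * ?H = basis_projector ?N y"
    using mat_adjoint_conj_column_projector[OF H y] hadamard_pow_adjoint by simp
  then have "2 - 2 / 2^n \<le> trace_norm (E (kron (?\<rho> y) \<tau>) - ?H * ?\<rho> y * mat_adjoint ?H)"
    using trace_norm_minus_basis_projector_ge[OF channel_kron_density[OF chan states[OF y] tau] y] small
      hadamard_pow_adjoint by simp
  also have "\<dots> \<le> 2 * chan_dist ?N (\<lambda>\<rho>. E (kron \<rho> \<tau>)) (\<lambda>\<rho>. ?H * \<rho> * mat_adjoint ?H)"
    using half_trace_norm_le_chan_dist[OF chan channel_unitary_conj[OF H], of ?N "\<lambda>\<rho>. kron \<rho> \<tau>" "\<lambda>\<rho>. \<rho>"]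
      bounded_hermitian_kron bounded_hermitian_density tau states[OF y] by fastforce
  finally show ?thesis
    using hadamard_pow_adjoint by simp
qed

end
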